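(* Let $S$ be a Boolean inverse monoid satisfying condition (H), and let $\nu\in IM(\mathcal G_{\mathrm{tight}}(S))$. Then $\eta_\nu:E(S)\to[0,\infty)$, $\eta_\nu(e)=\nu(D_e)$, is a normalized invariant mean on $S$, and $\nu\mapsto\eta_\nu$ is an affine isomorphism (bijection) from $IM(\mathcal G_{\mathrm{tight}}(S))$ onto $M(S)$.
   Context: $S$ is a Boolean inverse monoid (countable inverse monoid with zero, $s^*$ the inverse of $s$, in which finite compatible sets have joins, multiplication distributes over them, and the idempotents $E(S)$ form a Boolean algebra). $\mathcal J_s=\{e\in E(S):se=e\}$; condition (H): each $\mathcal J_s$ admits a finite cover (finite $C\subseteq\mathcal J_s$ such that every nonzero element of $\mathcal J_s$ has nonzero product with some $c\in C$). $M(S)$: normalized invariant means, i.e. $\mu:E(S)\to[0,\infty)$ with $\mu(1)=1$, $\mu(s^*s)=\mu(ss^* )$, and $\mu(e\vee f)=\mu(e)+\mu(f)$ when $ef=0$. $\widehat E_{\mathrm{tight}}(S)$ is the Stone space of ultrafilters of $E(S)$, $D_e=\{\xi: e\in\xi\}$ (clopen), $\theta_s:D_{s^*s}\to D_{ss^*}$, $\theta_s(\xi)=\{f: f\ge ses^*\text{ for some }e\in\xi\}$. $\mathcal G_{\mathrm{tight}}(S)$ is the groupoid of germs $[s,\xi]$ ($[s,\xi]=[t,\xi]$ iff $se=te$ for some $e\in\xi$), $d([s,\xi])=\xi$, $r([s,\xi])=\theta_s(\xi)$, with topology generated by $\Theta(s,U)=\{[s,\xi]:\xi\in U\}$, $U\subseteq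 D_{s^*s}$ open; its unit space is $\widehat E_{\mathrm{tight}}(S)$. For an étale groupoid $\mathcal G$, a bisection is an open set $U$ on which $r$ and $d$ are injective; $IM(\mathcal G)$ is the affine space of regular Borel probability measures $\nu$ on $\mathcal G^{(0)}$ with $\nu(r(U))=\nu(d(U))$ for all bisections $U$. *)

theory Defs
  imports "HOL-Probability.Probability"
begin

text \<open>The monoid is the whole (countable) type 'a, with multiplication m, inverse st (s*),
identity one and zero z.\<close>

definition idem :: "('a \<Rightarrow> 'a \<Rightarrow> 'a) \<Rightarrow> 'a set" where
  "idem m = {e. m e e = e}"

definition inverse_monoid_zero ::
  "('a \<Rightarrow> 'a \<Rightarrow> 'a) \<Rightarrow> ('a \<Rightarrow> 'a) \<Rightarrow> 'a \<Rightarrow> 'a \<Rightarrow> bool" where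
  "inverse_monoid_zero m st one z \<longleftrightarrow>
     (\<forall>a b c. m (m a b) c = m a (m b c)) \<and>
     (\<forall>a. m one a = a \<and> m a one = a) \<and>
     (\<forall>a. m z a = z \<and> m a z = z) \<and>
     (\<forall>s. m s (m (st s) s) = s \<and> m (st s) (m s (st s)) = st s) \<and>
     (\<forall>e\<in>idem m. \<forall>f\<in>idem m. m e f = m f e)"

definition nat_le :: "('a \<Rightarrow> 'a \<Rightarrow> 'a) \<Rightarrow> ('a \<Rightarrow> 'a) \<Rightarrow> 'a \<Rightarrow> 'a \<Rightarrow> bool" where
  "nat_le m st s t \<longleftrightarrow> s = m t (m (st s) s)"

definition compatible_set :: "('a \<Rightarrow> 'a \<Rightarrow> 'a) \<Rightarrow> ('a \<Rightarrow> 'a) \<Rightarrow> 'a set \<Rightarrow> bool" where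
  "compatible_set m st A \<longleftrightarrow>
     (\<forall>s\<in>A. \<forall>t\<in>A. m (st s) t \<in> idem m \<and> m s (st t) \<in> idem m)"

definition is_join :: "('a \<Rightarrow> 'a \<Rightarrow> 'a) \<Rightarrow> ('a \<Rightarrow> 'a) \<Rightarrow> 'a set \<Rightarrow> 'a \<Rightarrow> bool" where
  "is_join m st A j \<longleftrightarrow> (\<forall>a\<in>A. nat_le m st a j) \<and>
     (\<forall>u. (\<forall>a\<in>A. nat_le m st a u) \<longrightarrow> nat_le m st j u)"

definition join :: "('a \<Rightarrow> 'a \<Rightarrow> 'a) \<Rightarrow> ('a \<Rightarrow> 'a) \<Rightarrow> 'a set \<Rightarrow> 'a" where
  "join m st A = (THE j. is_join m st A j)"

definition idem_boolean_algebra ::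
  "('a \<Rightarrow> 'a \<Rightarrow> 'a) \<Rightarrow> ('a \<Rightarrow> 'a) \<Rightarrow> 'a \<Rightarrow> 'a \<Rightarrow> bool" where
  "idem_boolean_algebra m st one z \<longleftrightarrow>
     (\<forall>e\<in>idem m. \<forall>f\<in>idem m. \<exists>j\<in>idem m. is_join m st {e, f} j) \<and>
     (\<forall>e\<in>idem m. \<forall>f\<in>idem m. \<forall>g\<in>idem m.
        m e (join m st {f, g}) = join m st {m e f, m e g}) \<and>
     (\<forall>e\<in>idem m. \<exists>f\<in>idem m. m e f = z \<and> is_join m st {e, f} one)"

definition boolean_inverse_monoid ::
  "('a \<Rightarrow> 'a \<Rightarrow> 'a) \<Rightarrow> ('a \<Rightarrow> 'a) \<Rightarrow> 'a \<Rightarrow> 'a \<Rightarrow> bool" where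
  "boolean_inverse_monoid m st one z \<longleftrightarrow>
     inverse_monoid_zero m st one z \<and>
     (\<forall>A. finite A \<and> compatible_set m st A \<longrightarrow> (\<exists>j. is_join m st A j)) \<and>
     (\<forall>A s. finite A \<and> compatible_set m st A \<longrightarrow>
        m s (join m st A) = join m st ((\<lambda>a. m s a) ` A) \<and>
        m (join m st A) s = join m st ((\<lambda>a. m a s) ` A)) \<and>
     idem_boolean_algebra m st one z"

definition J_set :: "('a \<Rightarrow> 'a \<Rightarrow> 'a) \<Rightarrow> 'a \<Rightarrow> 'a set" where
  "J_set m s = {e \<in> idem m. m s e = e}"

definition condition_H :: "('a \<Rightarrow> 'a \<Rightarrow> 'a) \<Rightarrow> 'a \<Rightarrow> bool" where
  "condition_H m z \<longleftrightarrow> (\<forall>s. \<exists>C. finite C \<and> C \<subseteq> J_set m s \<and>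
      (\<forall>e\<in>J_set m s. e \<noteq> z \<longrightarrow> (\<exists>c\<in>C. m e c \<noteq> z)))"

text \<open>Normalized invariant means (as functions on E(S), extended by 0 outside E(S)).\<close>
definition inv_means :: "('a \<Rightarrow> 'a \<Rightarrow> 'a) \<Rightarrow> ('a \<Rightarrow> 'a) \<Rightarrow> 'a \<Rightarrow> 'a \<Rightarrow> ('a \<Rightarrow> real) set" where
  "inv_means m st one z = {\<mu>.
     (\<forall>e. e \<notin> idem m \<longrightarrow> \<mu> e = 0) \<and>
     (\<forall>e\<in>idem m. \<mu> e \<ge> 0) \<and>
     \<mu> one = 1 \<and>
     (\<forall>s. \<mu> (m (st s) s) = \<mu> (m s (st s))) \<and>
     (\<forall>e\<in>idem m. \<forall>f\<in>idem m. m e f = z \<longrightarrow> \<mu> (join m st {e, f}) = \<mu> e + \<mu> f)}"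

definition is_filter_E :: "('a \<Rightarrow> 'a \<Rightarrow> 'a) \<Rightarrow> ('a \<Rightarrow> 'a) \<Rightarrow> 'a \<Rightarrow> 'a set \<Rightarrow> bool" where
  "is_filter_E m st z F \<longleftrightarrow> F \<subseteq> idem m \<and> F \<noteq> {} \<and> z \<notin> F \<and>
     (\<forall>e\<in>F. \<forall>f\<in>F. m e f \<in> F) \<and>
     (\<forall>e\<in>F. \<forall>f\<in>idem m. nat_le m st e f \<longrightarrow> f \<in> F)"

definition is_ultrafilter_E :: "('a \<Rightarrow> 'a \<Rightarrow> 'a) \<Rightarrow> ('a \<Rightarrow> 'a) \<Rightarrow> 'a \<Rightarrow> 'a set \<Rightarrow> bool" where
  "is_ultrafilter_E m st z F \<longleftrightarrow> is_filter_E m st z F \<and>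
     (\<forall>G. is_filter_E m st z G \<and> F \<subseteq> G \<longrightarrow> G = F)"

definition D_set :: "('a \<Rightarrow> 'a \<Rightarrow> 'a) \<Rightarrow> ('a \<Rightarrow> 'a) \<Rightarrow> 'a \<Rightarrow> 'a \<Rightarrow> 'a set set" where
  "D_set m st z e = {\<xi>. is_ultrafilter_E m st z \<xi> \<and> e \<in> \<xi>}"

text \<open>Topology of the Stone space: generated by the clopen sets D_e (topspace = all ultrafilters,
since D_1 is everything).\<close>
definition unit_top :: "('a \<Rightarrow> 'a \<Rightarrow> 'a) \<Rightarrow> ('a \<Rightarrow> 'a) \<Rightarrow> 'a \<Rightarrow> 'a set topology" where
  "unit_top m st z = topology_generated_by (range (D_set m st z))"

definition theta :: "('a \<Rightarrow> 'a \<Rightarrow> 'a) \<Rightarrow> ('a \<Rightarrow> 'a) \<Rightarrow> 'a \<Rightarrow> 'a set \<Rightarrow> 'a set" where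
  "theta m st s \<xi> = {f \<in> idem m. \<exists>e\<in>\<xi>. nat_le m st (m s (m e (st s))) f}"

text \<open>A germ [s,xi] is represented by its equivalence class of pairs (t,xi).\<close>
definition germ :: "('a \<Rightarrow> 'a \<Rightarrow> 'a) \<Rightarrow> ('a \<Rightarrow> 'a) \<Rightarrow> 'a \<Rightarrow> 'a \<Rightarrow> 'a set \<Rightarrow> ('a \<times> 'a set) set" where
  "germ m st z s \<xi> = {(t, \<xi>) | t. \<xi> \<in> D_set m st z (m (st t) t) \<and> (\<exists>e\<in>\<xi>. m s e = m t e)}"

definition Theta :: "('a \<Rightarrow> 'a \<Rightarrow> 'a) \<Rightarrow> ('a \<Rightarrow> 'a) \<Rightarrow> 'a \<Rightarrow> 'a \<Rightarrow> 'a set set \<Rightarrow> ('a \<times> 'a set) set set" where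
  "Theta m st z s U = {germ m st z s \<xi> | \<xi>. \<xi> \<in> U}"

definition groupoid_top :: "('a \<Rightarrow> 'a \<Rightarrow> 'a) \<Rightarrow> ('a \<Rightarrow> 'a) \<Rightarrow> 'a \<Rightarrow> ('a \<times> 'a set) set topology" where
  "groupoid_top m st z = topology_generated_by
     {Theta m st z s U | s U. openin (unit_top m st z) U \<and> U \<subseteq> D_set m st z (m (st s) s)}"

definition germ_d :: "('a \<times> 'a set) set \<Rightarrow> 'a set" where
  "germ_d g = snd (SOME p. p \<in> g)"

definition germ_r :: "('a \<Rightarrow> 'a \<Rightarrow> 'a) \<Rightarrow> ('a \<Rightarrow> 'a) \<Rightarrow> ('a \<times> 'a set) set \<Rightarrow> 'a set" where
  "germ_r m st g = (let p = (SOME p. p \<in> g) in theta m st (fst p) (snd p))"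

definition bisection :: "('a \<Rightarrow> 'a \<Rightarrow> 'a) \<Rightarrow> ('a \<Rightarrow> 'a) \<Rightarrow> 'a \<Rightarrow> ('a \<times> 'a set) set set \<Rightarrow> bool" where
  "bisection m st z U \<longleftrightarrow> openin (groupoid_top m st z) U \<and>
     inj_on germ_d U \<and> inj_on (germ_r m st) U"

definition borel_of_top :: "'b topology \<Rightarrow> 'b measure" where
  "borel_of_top T = sigma (topspace T) {U. openin T U}"

definition regular_borel_prob :: "'b topology \<Rightarrow> 'b measure \<Rightarrow> bool" where
  "regular_borel_prob T \<nu> \<longleftrightarrow>
     space \<nu> = topspace T \<and> sets \<nu> = sets (borel_of_top T) \<and> prob_space \<nu> \<and>
     (\<forall>A\<in>sets \<nu>.
        measure \<nu> A = Inf {measure \<nu> U | U. openin T U \<and> A \<subseteq> U} \<and>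
        measure \<nu> A = Sup {measure \<nu> K | K. compactin T K \<and> K \<subseteq> A})"

definition IM :: "('a \<Rightarrow> 'a \<Rightarrow> 'a) \<Rightarrow> ('a \<Rightarrow> 'a) \<Rightarrow> 'a \<Rightarrow> 'a set measure set" where
  "IM m st z = {\<nu>. regular_borel_prob (unit_top m st z) \<nu> \<and>
     (\<forall>U. bisection m st z U \<longrightarrow>
        measure \<nu> (germ_r m st ` U) = measure \<nu> (germ_d ` U))}"

definition eta :: "('a \<Rightarrow> 'a \<Rightarrow> 'a) \<Rightarrow> ('a \<Rightarrow> 'a) \<Rightarrow> 'a \<Rightarrow> 'a set measure \<Rightarrow> 'a \<Rightarrow> real" where
  "eta m st z \<nu> e = (if e \<in> idem m then measure \<nu> (D_set m st z e) else 0)"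

end

theory Submission
  imports Defs
begin

text \<open>An invariant measure \<open>\<nu>\<close> is determined by its values on the clopen sets \<open>D(e)\<close>, which
form an intersection-stable generator of the Borel \<open>\<sigma>\<close>-algebra; and since the bisection
\<open>\<Theta>(s, D(s\<^sup>*s))\<close> carries \<open>D(s\<^sup>*s)\<close> onto \<open>D(ss\<^sup>*)\<close>, \<open>\<eta>\<^sub>\<nu>\<close> is an invariant mean.
Conversely, an invariant mean is a finitely additive measure on the Boolean algebra of the
sets \<open>D(e)\<close>; compactness of the Stone space makes it \<open>\<sigma>\<close>-additive there, so it extends to a
Borel probability measure, which is regular because every Borel set lies between a closed
and an open set of almost the same measure. Invariance under an arbitrary bisection follows by
cutting it into countably many disjoint slices \<open>\<Theta>(s, D(f))\<close> with \<open>f \<le> s\<^sup>*s\<close>: such a slice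
moves \<open>D(f)\<close> onto \<open>D(sfs\<^sup>*)\<close>, and \<open>f = (sf)\<^sup>*(sf)\<close> and \<open>sfs\<^sup>* = (sf)(sf)\<^sup>*\<close> have equal mean.\<close>

section \<open>Regularity of measures generated by clopen sets\<close>

definition open_closed_approximable :: "'b topology \<Rightarrow> 'b measure \<Rightarrow> 'b set \<Rightarrow> bool" where
  "open_closed_approximable T M A \<longleftrightarrow>
     (\<forall>\<epsilon>>0. \<exists>U K. openin T U \<and> closedin T K \<and> K \<subseteq> A \<and> A \<subseteq> U \<and> measure M U - measure M K < \<epsilon>)"

context finite_measure
begin

lemma measure_UN_le_suminf:
  assumes "\<And>i. X i \<in> sets M" and "\<And>i. measure M (X i) \<le> \<delta> i" and "summable \<delta>"
  shows "measure M (\<Union>i. X i) \<le> suminf \<delta>"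
proof -
  have sm: "summable (\<lambda>i. measure M (X i))"
    by (rule summable_comparison_test'[OF assms(3), of 0]) (simp add: assms(2))
  have "measure M (\<Union>i. X i) \<le> (\<Sum>i. measure M (X i))"
    by (rule finite_measure_subadditive_countably[OF _ sm]) (use assms(1) in auto)
  also have "\<dots> \<le> suminf \<delta>"
    by (rule suminf_le[OF assms(2) sm assms(3)])
  finally show ?thesis .
qed

lemma measure_UN_minus_initial_segment_small:
  fixes A :: "nat \<Rightarrow> 'a set"
  assumes "\<And>i. A i \<in> sets M" and "\<epsilon> > 0"
  obtains N where "measure M ((\<Union>i. A i) - (\<Union>i<N. A i)) < \<epsilon>"
proof -
  let ?B = "\<lambda>n. \<Union>i<n. A i"
  have B: "range ?B \<subseteq> sets M" using assms(1) by (auto intro!: sets.finite_UN finite_lessThan)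
  have "incseq ?B" by (rule incseq_SucI) (auto simp: lessThan_Suc)
  then have "(\<lambda>n. measure M (?B n)) \<longlonglongrightarrow> measure M (\<Union>n. ?B n)"
    by (rule finite_Lim_measure_incseq[OF B])
  also have "(\<Union>n. ?B n) = (\<Union>i. A i)" by blast
  finally obtain N where N: "dist (measure M (?B N)) (measure M (\<Union>i. A i)) < \<epsilon>"
    using metric_LIMSEQ_D[OF _ assms(2)] by blast
  have "measure M ((\<Union>i. A i) - ?B N) = measure M (\<Union>i. A i) - measure M (?B N)"
    by (rule finite_measure_Diff) (use assms(1) in auto)
  with N show ?thesis using that[of N] by (simp add: dist_real_def abs_less_iff)
qed

lemma closedin_in_sets:
  assumes "space M = topspace T" and "\<And>U. openin T U \<Longrightarrow> U \<in> sets M" and "closedin T K"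
  shows "K \<in> sets M"
proof -
  have "openin T (topspace T - K)"
    using assms(3) by (simp add: closedin_def)
  then have "space M - (topspace T - K) \<in> sets M"
    using assms(2) by blast
  then show ?thesis
    using assms(1) closedin_subset[OF assms(3)] by (simp add: Diff_Diff_Int inf_absorb2)
qed

context
  fixes T :: "'a topology"
  assumes space_eq: "space M = topspace T"
    and openin_sets: "\<And>U. openin T U \<Longrightarrow> U \<in> sets M"
begin

lemma closedin_sets: "closedin T K \<Longrightarrow> K \<in> sets M"
  by (rule closedin_in_sets[OF space_eq openin_sets])

lemma open_closed_approximable_Compl:
  assumes "open_closed_approximable T M A"
  shows "open_closed_approximable T M (topspace T - A)"
  unfolding open_closed_approximable_def
proof (intro allI impI)
  fix \<epsilon> :: real assume "\<epsilon> > 0"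
  from assms[unfolded open_closed_approximable_def, rule_format, OF this]
  obtain U K where UK: "openin T U" "closedin T K" "K \<subseteq> A" "A \<subseteq> U"
    "measure M U - measure M K < \<epsilon>"
    by blast
  have compl: "measure M (topspace T - K) = measure M (topspace T) - measure M K"
    "measure M (topspace T - U) = measure M (topspace T) - measure M U"
    using finite_measure_compl[OF closedin_sets[OF UK(2)]] finite_measure_compl[OF openin_sets[OF UK(1)]]
    unfolding space_eq by simp_all
  show "\<exists>U' K'. openin T U' \<and> closedin T K' \<and> K' \<subseteq> topspace T - A \<and>
      topspace T - A \<subseteq> U' \<and> measure M U' - measure M K' < \<epsilon>"
  proof (rule exI[of _ "topspace T - K"], rule exI[of _ "topspace T - U"], intro conjI)
    show "openin T (topspace T - K)" using UK(2) by (simp add: openin_diff)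
    show "closedin T (topspace T - U)" using UK(1) by (simp add: closedin_diff)
    show "measure M (topspace T - K) - measure M (topspace T - U) < \<epsilon>"
      using compl UK(5) by linarith
  qed (use UK in blast)+
qed

lemma open_closed_approximable_UN:
  fixes A :: "nat \<Rightarrow> 'a set"
  assumes sets: "\<And>i. A i \<in> sets M" and approx: "\<And>i. open_closed_approximable T M (A i)"
  shows "open_closed_approximable T M (\<Union>i. A i)"
  unfolding open_closed_approximable_def
proof (intro allI impI)
  fix \<epsilon> :: real assume "\<epsilon> > 0"
  define \<delta> where "\<delta> i = \<epsilon> / 4 * (1/2) ^ i" for i :: nat
  have \<delta>_sums: "\<delta> sums (\<epsilon> / 2)"
    using sums_mult[OF geometric_sums[of "1/2::real"], of "\<epsilon>/4"] by (simp add: \<delta>_def[abs_def])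
  have "\<delta> i > 0" for i using \<open>\<epsilon> > 0\<close> by (simp add: \<delta>_def)
  then have "\<exists>U K. openin T U \<and> closedin T K \<and> K \<subseteq> A i \<and> A i \<subseteq> U \<and>
      measure M U - measure M K < \<delta> i" for i
    using approx[of i, unfolded open_closed_approximable_def, rule_format] by presburger
  then obtain U K where U: "\<And>i. openin T (U i)" and K: "\<And>i. closedin T (K i)"
    and KAU: "\<And>i. K i \<subseteq> A i" "\<And>i. A i \<subseteq> U i"
    and UK: "\<And>i. measure M (U i) - measure M (K i) < \<delta> i"
    by metis
  have "measure M (U i - K i) \<le> \<delta> i" for i
  proof -
    have "K i \<subseteq> U i" using KAU[of i] by blast
    then show ?thesis
      using finite_measure_Diff[OF openin_sets[OF U] closedin_sets[OF K]] UK[of i] by simp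
  qed
  then have gaps: "measure M (\<Union>i. U i - K i) \<le> \<epsilon> / 2"
    using measure_UN_le_suminf[of "\<lambda>i. U i - K i" \<delta>] openin_sets[OF U] closedin_sets[OF K] \<delta>_sums
    by (auto simp: sums_iff)
  have "\<epsilon> / 2 > 0" using \<open>\<epsilon> > 0\<close> by simp
  then obtain N where tail: "measure M ((\<Union>i. A i) - (\<Union>i<N. A i)) < \<epsilon> / 2"
    by (rule measure_UN_minus_initial_segment_small[OF sets])
  let ?U = "\<Union>i. U i" and ?K = "\<Union>i<N. K i"
  have "?U - ?K \<subseteq> (\<Union>i. U i - K i) \<union> ((\<Union>i. A i) - (\<Union>i<N. A i))"
    using KAU by blast
  then have "measure M (?U - ?K) \<le> measure M (\<Union>i. U i - K i) + measure M ((\<Union>i. A i) - (\<Union>i<N. A i))"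
    using openin_sets[OF U] closedin_sets[OF K] sets
    by (intro order.trans[OF finite_measure_mono measure_Un_le]) auto
  moreover have "measure M (?U - ?K) = measure M ?U - measure M ?K"
    using KAU openin_sets[OF U] closedin_sets[OF K] by (intro finite_measure_Diff) fastforce+
  ultimately have "measure M ?U - measure M ?K < \<epsilon>"
    using gaps tail by linarith
  moreover have "openin T ?U" "closedin T ?K"
    using U K by (auto intro: closedin_Union)
  moreover have "?K \<subseteq> (\<Union>i. A i)" "(\<Union>i. A i) \<subseteq> ?U"
    using KAU by blast+
  ultimately show "\<exists>U K. openin T U \<and> closedin T K \<and> K \<subseteq> (\<Union>i. A i) \<and> (\<Union>i. A i) \<subseteq> U \<and>
      measure M U - measure M K < \<epsilon>"
    by blast
qed

lemma open_closed_approximable_sigma_sets: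
  assumes clopen: "\<And>C. C \<in> \<C> \<Longrightarrow> openin T C \<and> closedin T C"
    and sets_eq: "sets M = sigma_sets (topspace T) \<C>"
    and "A \<in> sets M"
  shows "open_closed_approximable T M A"
  using assms(3) unfolding sets_eq
proof (induction rule: sigma_sets.induct)
  case (Basic C)
  then show ?case
    unfolding open_closed_approximable_def
    by (intro allI impI exI[of _ C]) (simp add: clopen)
next
  case Empty
  then show ?case
    unfolding open_closed_approximable_def by (intro allI impI exI[of _ "{}"]) simp
next
  case (Compl A)
  show ?case using Compl.IH by (rule open_closed_approximable_Compl)
next
  case (Union A)
  then show ?case
    using open_closed_approximable_UN[of A] sigma_sets.Union[of A] unfolding sets_eq by auto
qed

lemma outer_regular_if_open_closed_approximable:
  assumes "A \<in> sets M" and approx: "open_closed_approximable T M A"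
  shows "measure M A = Inf {measure M U | U. openin T U \<and> A \<subseteq> U}"
proof (rule antisym)
  let ?S = "{measure M U | U. openin T U \<and> A \<subseteq> U}"
  have "topspace T \<in> {U. openin T U \<and> A \<subseteq> U}"
    using sets.sets_into_space[OF assms(1)] space_eq by auto
  then have "?S \<noteq> {}" by blast
  then show "measure M A \<le> Inf ?S"
    by (rule cInf_greatest) (auto intro!: finite_measure_mono openin_sets)
  show "Inf ?S \<le> measure M A"
  proof (rule field_le_epsilon)
    fix \<epsilon> :: real assume "\<epsilon> > 0"
    from approx[unfolded open_closed_approximable_def, rule_format, OF this]
    obtain U K where UK: "openin T U" "closedin T K" "K \<subseteq> A" "A \<subseteq> U"
      "measure M U - measure M K < \<epsilon>"
      by blast
    have "Inf ?S \<le> measure M U"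
      by (rule cInf_lower) (use UK in \<open>auto intro!: bdd_belowI[of _ 0]\<close>)
    moreover have "measure M K \<le> measure M A"
      using UK(3) assms(1) by (rule finite_measure_mono)
    ultimately show "Inf ?S \<le> measure M A + \<epsilon>" using UK(5) by linarith
  qed
qed

lemma inner_regular_if_open_closed_approximable:
  assumes "compact_space T" and "A \<in> sets M" and approx: "open_closed_approximable T M A"
  shows "measure M A = Sup {measure M K | K. compactin T K \<and> K \<subseteq> A}"
proof (rule antisym)
  let ?S = "{measure M K | K. compactin T K \<and> K \<subseteq> A}"
  have le_A: "measure M K \<le> measure M A" if "K \<subseteq> A" for K
    using finite_measure_mono[OF that assms(2)] measure_notin_sets[of K M]
    by (cases "K \<in> sets M") simp_all
  have "?S \<noteq> {}" using compactin_empty by blast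
  then show "Sup ?S \<le> measure M A"
    by (rule cSup_least) (auto intro: le_A)
  show "measure M A \<le> Sup ?S"
  proof (rule field_le_epsilon)
    fix \<epsilon> :: real assume "\<epsilon> > 0"
    from approx[unfolded open_closed_approximable_def, rule_format, OF this]
    obtain U K where UK: "openin T U" "closedin T K" "K \<subseteq> A" "A \<subseteq> U"
      "measure M U - measure M K < \<epsilon>"
      by blast
    have "compactin T K" using closedin_compact_space[OF assms(1) UK(2)] .
    then have "measure M K \<le> Sup ?S"
      by (intro cSup_upper) (use UK(3) le_A in \<open>auto intro!: bdd_aboveI[of _ "measure M A"]\<close>)
    moreover have "measure M A \<le> measure M U"
      using UK(4) openin_sets[OF UK(1)] by (rule finite_measure_mono)
    ultimately show "measure M A \<le> Sup ?S + \<epsilon>" using UK(5) by linarith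
  qed
qed

end

end

section \<open>Boolean inverse monoids\<close>

locale bool_inv_monoid =
  fixes m :: "'a::countable \<Rightarrow> 'a \<Rightarrow> 'a" and st :: "'a \<Rightarrow> 'a" and one z :: 'a
  assumes boolean: "boolean_inverse_monoid m st one z"
begin

lemma inverse_monoid: "inverse_monoid_zero m st one z"
  using boolean by (simp add: boolean_inverse_monoid_def)

abbreviation mul (infixl "\<odot>" 70) where "a \<odot> b \<equiv> m a b"

lemma mult_assoc: "(a \<odot> b) \<odot> c = a \<odot> (b \<odot> c)"
  using inverse_monoid unfolding inverse_monoid_zero_def by simp
lemma one_mult[simp]: "one \<odot> a = a" and mult_one[simp]: "a \<odot> one = a"
  using inverse_monoid unfolding inverse_monoid_zero_def by simp_all
lemma zero_mult[simp]: "z \<odot> a = z" and mult_zero[simp]: "a \<odot> z = z"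
  using inverse_monoid unfolding inverse_monoid_zero_def by simp_all
lemma mult_st_mult: "s \<odot> (st s \<odot> s) = s" and st_mult_st: "st s \<odot> (s \<odot> st s) = st s"
  using inverse_monoid unfolding inverse_monoid_zero_def by simp_all
lemma idem_commute: "e \<in> idem m \<Longrightarrow> f \<in> idem m \<Longrightarrow> e \<odot> f = f \<odot> e"
  using inverse_monoid unfolding inverse_monoid_zero_def by simp

lemma idem_iff: "e \<in> idem m \<longleftrightarrow> e \<odot> e = e" by (simp add: idem_def)

lemma st_mult_idem[simp]: "st s \<odot> s \<in> idem m" "s \<odot> st s \<in> idem m"
  by (simp_all add: idem_iff mult_assoc mult_st_mult st_mult_st)

lemma idem_mult_closed[simp]: "e \<in> idem m \<Longrightarrow> f \<in> idem m \<Longrightarrow> e \<odot> f \<in> idem m"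
proof -
  assume e: "e \<in> idem m" and f: "f \<in> idem m"
  have "e \<odot> f \<odot> (e \<odot> f) = e \<odot> (f \<odot> e) \<odot> f" by (simp add: mult_assoc)
  also have "\<dots> = e \<odot> (e \<odot> f) \<odot> f" using idem_commute[OF e f] by simp
  also have "\<dots> = e \<odot> e \<odot> (f \<odot> f)" by (simp add: mult_assoc)
  finally show ?thesis using e f by (simp add: idem_iff)
qed

lemma zero_idem[simp]: "z \<in> idem m" and one_idem[simp]: "one \<in> idem m"
  by (simp_all add: idem_iff)

lemma inverse_unique:
  assumes "a \<odot> x \<odot> a = a" "x \<odot> a \<odot> x = x" "a \<odot> y \<odot> a = a" "y \<odot> a \<odot> y = y"
  shows "x = y"
proof -
  have xa: "x \<odot> a \<in> idem m" using assms(2) by (simp add: idem_iff flip: mult_assoc)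
  have ya: "y \<odot> a \<in> idem m" using assms(4) by (simp add: idem_iff flip: mult_assoc)
  have "a \<odot> x \<odot> (a \<odot> x) = (a \<odot> x \<odot> a) \<odot> x" by (simp add: mult_assoc)
  then have ax: "a \<odot> x \<in> idem m" using assms(1) by (simp add: idem_iff)
  have "a \<odot> y \<odot> (a \<odot> y) = (a \<odot> y \<odot> a) \<odot> y" by (simp add: mult_assoc)
  then have ay: "a \<odot> y \<in> idem m" using assms(3) by (simp add: idem_iff)
  have "x = x \<odot> a \<odot> x" using assms(2) by simp
  also have "\<dots> = x \<odot> (a \<odot> y \<odot> a) \<odot> x" using assms(3) by simp
  also have "\<dots> = (x \<odot> a) \<odot> (y \<odot> a) \<odot> x" by (simp add: mult_assoc)
  also have "\<dots> = (y \<odot> a) \<odot> (x \<odot> a) \<odot> x" using idem_commute[OF xa ya] by simp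
  also have "\<dots> = y \<odot> a \<odot> x" using assms(2) by (simp add: mult_assoc)
  finally have 1: "x = y \<odot> a \<odot> x" .
  have "y = y \<odot> a \<odot> y" using assms(4) by simp
  also have "\<dots> = y \<odot> (a \<odot> x \<odot> a) \<odot> y" using assms(1) by simp
  also have "\<dots> = y \<odot> ((a \<odot> x) \<odot> (a \<odot> y))" by (simp add: mult_assoc)
  also have "\<dots> = y \<odot> ((a \<odot> y) \<odot> (a \<odot> x))" using idem_commute[OF ax ay] by simp
  also have "\<dots> = y \<odot> a \<odot> x" using assms(4) by (simp add: mult_assoc[symmetric])
  finally have 2: "y = y \<odot> a \<odot> x" .
  from 1 2 show ?thesis by metis
qed

lemma st_idem[simp]: "e \<in> idem m \<Longrightarrow> st e = e"
  by (rule inverse_unique[of e]) (simp_all add: idem_iff mult_assoc mult_st_mult st_mult_st)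

lemma st_st[simp]: "st (st s) = s"
  by (rule inverse_unique[of "st s"]) (simp_all add: mult_assoc mult_st_mult st_mult_st)

lemma st_mult: "st (s \<odot> t) = st t \<odot> st s"
proof (rule inverse_unique[of "s \<odot> t"])
  have c: "t \<odot> st t \<odot> (st s \<odot> s) = st s \<odot> s \<odot> (t \<odot> st t)" using idem_commute by simp
  show "s \<odot> t \<odot> st (s \<odot> t) \<odot> (s \<odot> t) = s \<odot> t" by (simp only: mult_assoc[of "s \<odot> t" "st (s \<odot> t)" "s \<odot> t"] mult_st_mult)
  show "st (s \<odot> t) \<odot> (s \<odot> t) \<odot> st (s \<odot> t) = st (s \<odot> t)" by (simp only: mult_assoc[of "st (s \<odot> t)" "s \<odot> t" "st (s \<odot> t)"] st_mult_st)
  have "s \<odot> t \<odot> (st t \<odot> st s) \<odot> (s \<odot> t) = s \<odot> (t \<odot> st t \<odot> (st s \<odot> s)) \<odot> t" by (simp add: mult_assoc)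
  also have "\<dots> = (s \<odot> (st s \<odot> s)) \<odot> (t \<odot> (st t \<odot> t))" unfolding c by (simp add: mult_assoc)
  also have "\<dots> = s \<odot> t" by (simp add: mult_st_mult)
  finally show "s \<odot> t \<odot> (st t \<odot> st s) \<odot> (s \<odot> t) = s \<odot> t" .
  have "st t \<odot> st s \<odot> (s \<odot> t) \<odot> (st t \<odot> st s) = st t \<odot> (st s \<odot> s \<odot> (t \<odot> st t)) \<odot> st s" by (simp add: mult_assoc)
  also have "\<dots> = (st t \<odot> (t \<odot> st t)) \<odot> (st s \<odot> (s \<odot> st s))" unfolding c[symmetric] by (simp add: mult_assoc)
  also have "\<dots> = st t \<odot> st s" by (simp add: st_mult_st)
  finally show "st t \<odot> st s \<odot> (s \<odot> t) \<odot> (st t \<odot> st s) = st t \<odot> st s" .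
qed

lemma boolean_algebra: "idem_boolean_algebra m st one z"
  using boolean by (simp add: boolean_inverse_monoid_def)

lemma nat_le_idem_iff: "e \<in> idem m \<Longrightarrow> f \<in> idem m \<Longrightarrow> nat_le m st e f \<longleftrightarrow> e \<odot> f = e"
  unfolding nat_le_def using idem_commute[of e f] by (auto simp: idem_iff)

lemma nat_le_refl: "nat_le m st s s"
  unfolding nat_le_def by (simp add: mult_st_mult)

lemma nat_le_zero: "nat_le m st z u"
  unfolding nat_le_def by simp

lemma nat_le_antisym:
  assumes "nat_le m st s t" "nat_le m st t s"
  shows "s = t"
proof -
  have s: "s = t \<odot> (st s \<odot> s)" and t: "t = s \<odot> (st t \<odot> t)"
    using assms unfolding nat_le_def by auto
  have "t = t \<odot> (st s \<odot> s) \<odot> (st t \<odot> t)" using t s by simp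
  also have "\<dots> = t \<odot> ((st s \<odot> s) \<odot> (st t \<odot> t))" by (simp add: mult_assoc)
  also have "\<dots> = t \<odot> ((st t \<odot> t) \<odot> (st s \<odot> s))" using idem_commute[of "st s \<odot> s" "st t \<odot> t"] by simp
  also have "\<dots> = (t \<odot> (st t \<odot> t)) \<odot> (st s \<odot> s)" by (simp add: mult_assoc)
  also have "\<dots> = t \<odot> (st s \<odot> s)" by (simp add: mult_st_mult)
  finally show ?thesis using s by simp
qed

lemma join_eqI: "is_join m st A j \<Longrightarrow> join m st A = j"
  unfolding join_def
  by (rule the_equality) (auto simp: is_join_def intro: nat_le_antisym)

definition idem_sup :: "'a \<Rightarrow> 'a \<Rightarrow> 'a" where
  "idem_sup e f = join m st {e, f}"

lemma idem_sup_is_join: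
  assumes "e \<in> idem m" "f \<in> idem m"
  shows "idem_sup e f \<in> idem m" "is_join m st {e, f} (idem_sup e f)"
proof -
  obtain j where "j \<in> idem m" "is_join m st {e, f} j" using boolean_algebra assms
    unfolding idem_boolean_algebra_def by blast
  then show "idem_sup e f \<in> idem m" "is_join m st {e, f} (idem_sup e f)" using join_eqI idem_sup_def by auto
qed

lemma idem_sup_upper:
  assumes "e \<in> idem m" "f \<in> idem m"
  shows "e \<odot> idem_sup e f = e" "f \<odot> idem_sup e f = f"
  using idem_sup_is_join[OF assms] assms unfolding is_join_def by (auto simp: nat_le_idem_iff)

lemma idem_mult_sup_distrib: "e \<in> idem m \<Longrightarrow> f \<in> idem m \<Longrightarrow> g \<in> idem m \<Longrightarrow> e \<odot> idem_sup f g = idem_sup (e \<odot> f) (e \<odot> g)"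
  using boolean_algebra unfolding idem_boolean_algebra_def idem_sup_def by blast

lemma idem_sup_zero:
  assumes "x \<in> idem m"
  shows "idem_sup x z = x"
proof -
  have "is_join m st {x, z} x" unfolding is_join_def using nat_le_refl nat_le_zero by auto
  then show ?thesis by (simp add: idem_sup_def join_eqI)
qed

definition idem_compl :: "'a \<Rightarrow> 'a" where
  "idem_compl e = (SOME f. f \<in> idem m \<and> e \<odot> f = z \<and> is_join m st {e, f} one)"

lemma idem_complement:
  assumes "e \<in> idem m"
  shows "idem_compl e \<in> idem m" "e \<odot> idem_compl e = z" "idem_sup e (idem_compl e) = one"
proof -
  have "\<exists>f. f \<in> idem m \<and> e \<odot> f = z \<and> is_join m st {e, f} one"
    using boolean_algebra assms unfolding idem_boolean_algebra_def by blast
  then have "idem_compl e \<in> idem m \<and> e \<odot> idem_compl e = z \<and> is_join m st {e, idem_compl e} one"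
    unfolding idem_compl_def by (rule someI_ex)
  then show "idem_compl e \<in> idem m" "e \<odot> idem_compl e = z" "idem_sup e (idem_compl e) = one"
    by (auto simp: idem_sup_def join_eqI)
qed

lemma idem_mult_mono:
  assumes "a \<in> idem m" "b \<in> idem m" "f \<in> idem m" "g \<in> idem m" "a \<odot> f = a" "b \<odot> g = b"
  shows "(a \<odot> b) \<odot> (f \<odot> g) = a \<odot> b"
proof -
  have "(a \<odot> b) \<odot> (f \<odot> g) = a \<odot> (b \<odot> f) \<odot> g" by (simp add: mult_assoc)
  also have "\<dots> = a \<odot> (f \<odot> b) \<odot> g" using idem_commute[of b f] assms by simp
  also have "\<dots> = (a \<odot> f) \<odot> (b \<odot> g)" by (simp add: mult_assoc)
  finally show ?thesis using assms by simp
qed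

lemma idem_le_trans: "a \<odot> b = a \<Longrightarrow> b \<odot> c = b \<Longrightarrow> a \<odot> c = a"
  by (metis mult_assoc)

lemma idem_mult_le_left:
  assumes "e \<in> idem m" "f \<in> idem m"
  shows "(e \<odot> f) \<odot> e = e \<odot> f"
proof -
  have "(e \<odot> f) \<odot> e = e \<odot> (e \<odot> f)" using idem_commute[of f e] assms by (simp add: mult_assoc)
  also have "\<dots> = (e \<odot> e) \<odot> f" by (simp add: mult_assoc)
  finally show ?thesis using assms by (simp add: idem_iff)
qed

lemma idem_mult_le_right: "e \<in> idem m \<Longrightarrow> f \<in> idem m \<Longrightarrow> (e \<odot> f) \<odot> f = e \<odot> f"
  by (simp add: mult_assoc idem_iff)

section \<open>Filters and ultrafilters of idempotents\<close>

abbreviation "filt F \<equiv> is_filter_E m st z F"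
abbreviation "ultra F \<equiv> is_ultrafilter_E m st z F"

lemma filter_idem: "filt F \<Longrightarrow> e \<in> F \<Longrightarrow> e \<in> idem m"
  unfolding is_filter_E_def by auto
lemma filter_zero: "filt F \<Longrightarrow> z \<notin> F"
  unfolding is_filter_E_def by auto
lemma filter_mult: "filt F \<Longrightarrow> e \<in> F \<Longrightarrow> f \<in> F \<Longrightarrow> e \<odot> f \<in> F"
  unfolding is_filter_E_def by auto
lemma filter_upward: "filt F \<Longrightarrow> e \<in> F \<Longrightarrow> f \<in> idem m \<Longrightarrow> e \<odot> f = e \<Longrightarrow> f \<in> F"
  unfolding is_filter_E_def using nat_le_idem_iff by (metis subsetD)
lemma filter_one: "filt F \<Longrightarrow> one \<in> F"
proof -
  assume F: "filt F"
  then obtain e where "e \<in> F" unfolding is_filter_E_def by auto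
  then show ?thesis using filter_upward[OF F] by simp
qed
lemma filter_multD: "filt F \<Longrightarrow> e \<in> idem m \<Longrightarrow> f \<in> idem m \<Longrightarrow> e \<odot> f \<in> F \<Longrightarrow> e \<in> F \<and> f \<in> F"
  using filter_upward idem_mult_le_left idem_mult_le_right by blast

definition mprod :: "'a list \<Rightarrow> 'a" where
  "mprod xs = foldr m xs one"

lemma mprod_simps[simp]: "mprod [] = one" "mprod (x # xs) = x \<odot> mprod xs"
  by (simp_all add: mprod_def)

lemma mprod_idem: "set xs \<subseteq> idem m \<Longrightarrow> mprod xs \<in> idem m"
  by (induction xs) auto

lemma mprod_le: "set xs \<subseteq> idem m \<Longrightarrow> x \<in> set xs \<Longrightarrow> mprod xs \<odot> x = mprod xs"
proof (induction xs)
  case Nil then show ?case by simp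
next
  case (Cons y ys)
  have y: "y \<in> idem m" and ys: "set ys \<subseteq> idem m" using Cons.prems by auto
  have P: "mprod ys \<in> idem m" using mprod_idem[OF ys] .
  show ?case
  proof (cases "x = y")
    case True
    then show ?thesis using idem_mult_le_left[OF y P] by simp
  next
    case False
    then have "mprod ys \<odot> x = mprod ys" using Cons by auto
    then show ?thesis by (simp add: mult_assoc)
  qed
qed

lemma mprod_greatest: "g \<in> idem m \<Longrightarrow> set xs \<subseteq> idem m \<Longrightarrow> (\<forall>x\<in>set xs. g \<odot> x = g) \<Longrightarrow> g \<odot> mprod xs = g"
  by (induction xs) (auto simp flip: mult_assoc)

lemma mprod_append: "mprod (xs @ ys) = mprod xs \<odot> mprod ys"
  by (induction xs) (auto simp: mult_assoc)

lemma filter_mprod: "filt F \<Longrightarrow> set xs \<subseteq> F \<Longrightarrow> mprod xs \<in> F"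
  by (induction xs) (auto simp: filter_one filter_mult)

definition generated_filter :: "'a set \<Rightarrow> 'a set" where
  "generated_filter A = {f \<in> idem m. \<exists>xs. set xs \<subseteq> A \<and> mprod xs \<odot> f = mprod xs}"

lemma subset_generated_filter: "A \<subseteq> idem m \<Longrightarrow> A \<subseteq> generated_filter A"
  unfolding generated_filter_def by (auto intro!: exI[of _ "[_]"] simp: idem_iff)

lemma is_filter_generated_filter:
  assumes A: "A \<subseteq> idem m" and nz: "z \<notin> generated_filter A"
  shows "filt (generated_filter A)"
  unfolding is_filter_E_def
proof (intro conjI ballI impI)
  show "generated_filter A \<subseteq> idem m" unfolding generated_filter_def by auto
  show "generated_filter A \<noteq> {}" unfolding generated_filter_def by (auto intro!: exI[of _ one] exI[of _ "[]"])
  show "z \<notin> generated_filter A" by fact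
next
  fix e f assume e: "e \<in> generated_filter A" and f: "f \<in> generated_filter A"
  then obtain xs ys where xs: "set xs \<subseteq> A" "mprod xs \<odot> e = mprod xs" and ys: "set ys \<subseteq> A" "mprod ys \<odot> f = mprod ys"
    and ei: "e \<in> idem m" and fi: "f \<in> idem m" unfolding generated_filter_def by auto
  have "mprod (xs @ ys) \<odot> (e \<odot> f) = mprod (xs @ ys)"
    unfolding mprod_append using xs ys ei fi A
    by (intro idem_mult_mono) (auto intro!: mprod_idem)
  then show "e \<odot> f \<in> generated_filter A" unfolding generated_filter_def using ei fi xs ys
    by (auto intro!: exI[of _ "xs @ ys"])
next
  fix e f assume e: "e \<in> generated_filter A" and f: "f \<in> idem m" and le: "nat_le m st e f"
  then obtain xs where xs: "set xs \<subseteq> A" "mprod xs \<odot> e = mprod xs" and ei: "e \<in> idem m"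
    unfolding generated_filter_def by auto
  have "e \<odot> f = e" using le nat_le_idem_iff ei f by auto
  then have "mprod xs \<odot> f = mprod xs" using xs idem_le_trans by metis
  then show "f \<in> generated_filter A" unfolding generated_filter_def using f xs by auto
qed

lemma ultrafilter_extends:
  assumes F: "filt F"
  shows "\<exists>\<xi>. ultra \<xi> \<and> F \<subseteq> \<xi>"
proof -
  let ?A = "{G. filt G \<and> F \<subseteq> G}"
  have "\<exists>M\<in>?A. \<forall>X\<in>?A. M \<subseteq> X \<longrightarrow> X = M"
  proof (rule Zorn_Lemma2, intro ballI)
    fix C assume C: "C \<in> chains ?A"
    show "\<exists>U\<in>?A. \<forall>X\<in>C. X \<subseteq> U"
    proof (cases "C = {}")
      case True then show ?thesis using F by auto
    next
      case False
      have CA: "C \<subseteq> ?A" and ch: "chain\<^sub>\<subseteq> C" using C by (auto simp: chains_def)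
      have "filt (\<Union>C)" unfolding is_filter_E_def
      proof (intro conjI ballI impI)
        show "\<Union>C \<subseteq> idem m" using CA filter_idem by blast
        show "\<Union>C \<noteq> {}" using False CA unfolding is_filter_E_def by blast
        show "z \<notin> \<Union>C" using CA filter_zero by blast
      next
        fix e f assume "e \<in> \<Union>C" "f \<in> \<Union>C"
        then obtain G H where G: "G \<in> C" "e \<in> G" and H: "H \<in> C" "f \<in> H" by auto
        from ch G H have "G \<subseteq> H \<or> H \<subseteq> G" unfolding chain_subset_def by auto
        then show "e \<odot> f \<in> \<Union>C" using G H CA filter_mult by blast
      next
        fix e f assume "e \<in> \<Union>C" "f \<in> idem m" "nat_le m st e f"
        then show "f \<in> \<Union>C" using CA unfolding is_filter_E_def by blast
      qed
      obtain X where "X \<in> C" using False by auto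
      then have "F \<subseteq> \<Union>C" using CA by auto
      then show ?thesis using \<open>filt (\<Union>C)\<close> by blast
    qed
  qed
  then obtain M where M: "filt M" "F \<subseteq> M" and max: "\<forall>X\<in>?A. M \<subseteq> X \<longrightarrow> X = M" by auto
  have "ultra M" unfolding is_ultrafilter_E_def using M max by auto
  then show ?thesis using M by auto
qed

lemma ultrafilter_containing:
  assumes "e \<in> idem m" "e \<noteq> z"
  shows "\<exists>\<xi>. ultra \<xi> \<and> e \<in> \<xi>"
proof -
  have "z \<notin> generated_filter {e}"
  proof
    assume "z \<in> generated_filter {e}"
    then obtain xs where xs: "set xs \<subseteq> {e}" "mprod xs = z" unfolding generated_filter_def by auto
    have "e \<odot> mprod xs = e" using xs assms by (intro mprod_greatest) (auto simp: idem_iff)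
    then show False using xs assms by simp
  qed
  then have "filt (generated_filter {e})" using is_filter_generated_filter assms by auto
  then show ?thesis using ultrafilter_extends subset_generated_filter[of "{e}"] assms by blast
qed

lemma ultrafilter_filter: "ultra \<xi> \<Longrightarrow> filt \<xi>" unfolding is_ultrafilter_E_def by auto

lemma ultrafilter_disjoint_witness:
  assumes U: "ultra \<xi>" and e: "e \<in> idem m" and ne: "e \<notin> \<xi>"
  shows "\<exists>g\<in>\<xi>. g \<odot> e = z"
proof (rule ccontr)
  assume nex: "\<not> ?thesis"
  have F: "filt \<xi>" using U ultrafilter_filter by auto
  have A: "insert e \<xi> \<subseteq> idem m" using e F filter_idem by auto
  have "z \<notin> generated_filter (insert e \<xi>)"
  proof
    assume "z \<in> generated_filter (insert e \<xi>)"
    then obtain xs where xs: "set xs \<subseteq> insert e \<xi>" "mprod xs = z" unfolding generated_filter_def by auto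
    let ?ys = "filter (\<lambda>x. x \<noteq> e) xs"
    have ys: "set ?ys \<subseteq> \<xi>" using xs by auto
    let ?g = "mprod ?ys"
    have g: "?g \<in> \<xi>" using filter_mprod[OF F ys] .
    have gi: "?g \<in> idem m" using g F filter_idem by auto
    have "?g \<odot> e \<odot> mprod xs = ?g \<odot> e"
    proof (rule mprod_greatest)
      show "?g \<odot> e \<in> idem m" using gi e by simp
      show "set xs \<subseteq> idem m" using xs A by auto
      show "\<forall>x\<in>set xs. ?g \<odot> e \<odot> x = ?g \<odot> e"
      proof
        fix x assume x: "x \<in> set xs"
        show "?g \<odot> e \<odot> x = ?g \<odot> e"
        proof (cases "x = e")
          case True then show ?thesis using e by (simp add: mult_assoc idem_iff)
        next
          case False
          then have gx: "?g \<odot> x = ?g" using x ys F filter_idem by (intro mprod_le) auto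
          have xi: "x \<in> idem m" using x xs A by auto
          have "?g \<odot> e \<odot> x = ?g \<odot> (x \<odot> e)" using idem_commute[OF e xi] by (simp add: mult_assoc)
          also have "\<dots> = ?g \<odot> e" using gx by (simp add: mult_assoc[symmetric])
          finally show ?thesis .
        qed
      qed
    qed
    then have "?g \<odot> e = z" using xs by simp
    then show False using nex g by auto
  qed
  then have "filt (generated_filter (insert e \<xi>))" using is_filter_generated_filter A by auto
  moreover have "\<xi> \<subseteq> generated_filter (insert e \<xi>)" using subset_generated_filter[OF A] by auto
  ultimately have "generated_filter (insert e \<xi>) = \<xi>" using U unfolding is_ultrafilter_E_def by auto
  then show False using subset_generated_filter[OF A] ne by auto
qed

lemma ultrafilter_mult_iff: "ultra \<xi> \<Longrightarrow> e \<in> idem m \<Longrightarrow> f \<in> idem m \<Longrightarrow> e \<odot> f \<in> \<xi> \<longleftrightarrow> e \<in> \<xi> \<and> f \<in> \<xi>"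
  using ultrafilter_filter filter_multD filter_mult by blast

lemma ultrafilter_sup_iff:
  assumes U: "ultra \<xi>" and e: "e \<in> idem m" and f: "f \<in> idem m"
  shows "idem_sup e f \<in> \<xi> \<longleftrightarrow> e \<in> \<xi> \<or> f \<in> \<xi>"
proof
  have F: "filt \<xi>" using U ultrafilter_filter by auto
  assume j: "idem_sup e f \<in> \<xi>"
  show "e \<in> \<xi> \<or> f \<in> \<xi>"
  proof (rule ccontr)
    assume "\<not> (e \<in> \<xi> \<or> f \<in> \<xi>)"
    then obtain g h where g: "g \<in> \<xi>" "g \<odot> e = z" and h: "h \<in> \<xi>" "h \<odot> f = z"
      using ultrafilter_disjoint_witness[OF U e] ultrafilter_disjoint_witness[OF U f] by blast
    have gi: "g \<in> idem m" and hi: "h \<in> idem m" using g h F filter_idem by auto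
    have "g \<odot> h \<odot> e = z" using g idem_commute[OF gi hi] by (simp add: mult_assoc)
    moreover have "g \<odot> h \<odot> f = z" using h by (simp add: mult_assoc)
    ultimately have "g \<odot> h \<odot> idem_sup e f = z" using idem_mult_sup_distrib[of "g \<odot> h" e f] gi hi e f idem_sup_zero by simp
    moreover have "g \<odot> h \<odot> idem_sup e f \<in> \<xi>" using F g h j filter_mult by auto
    ultimately show False using F filter_zero by auto
  qed
next
  have F: "filt \<xi>" using U ultrafilter_filter by auto
  assume "e \<in> \<xi> \<or> f \<in> \<xi>"
  then show "idem_sup e f \<in> \<xi>" using filter_upward[OF F] idem_sup_upper[OF e f] idem_sup_is_join[OF e f] by blast
qed

lemma ultrafilter_compl_iff:
  assumes U: "ultra \<xi>" and e: "e \<in> idem m"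
  shows "idem_compl e \<in> \<xi> \<longleftrightarrow> e \<notin> \<xi>"
proof -
  have F: "filt \<xi>" using U ultrafilter_filter by auto
  have "idem_sup e (idem_compl e) \<in> \<xi>" using idem_complement[OF e] filter_one[OF F] by simp
  then have 1: "e \<in> \<xi> \<or> idem_compl e \<in> \<xi>" using ultrafilter_sup_iff[OF U e idem_complement(1)[OF e]] by simp
  have "\<not> (e \<in> \<xi> \<and> idem_compl e \<in> \<xi>)" using filter_mult[OF F] idem_complement[OF e] filter_zero[OF F] by metis
  with 1 show ?thesis by auto
qed

lemma ultrafilter_zero: "ultra \<xi> \<Longrightarrow> z \<notin> \<xi>" using ultrafilter_filter filter_zero by blast
lemma ultrafilter_one: "ultra \<xi> \<Longrightarrow> one \<in> \<xi>" using ultrafilter_filter filter_one by blast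
lemma ultrafilter_idem: "ultra \<xi> \<Longrightarrow> e \<in> \<xi> \<Longrightarrow> e \<in> idem m" using ultrafilter_filter filter_idem by blast

section \<open>The tight spectrum\<close>

definition UF :: "'a set set" where
  "UF = {\<xi>. ultra \<xi>}"
abbreviation "DD e \<equiv> D_set m st z e"
abbreviation "TT \<equiv> unit_top m st z"

lemma D_set_iff: "\<xi> \<in> DD e \<longleftrightarrow> ultra \<xi> \<and> e \<in> \<xi>" by (simp add: D_set_def)

lemma D_set_subset: "DD e \<subseteq> UF" by (auto simp: D_set_iff UF_def)
lemma D_set_one: "DD one = UF" by (auto simp: D_set_iff UF_def ultrafilter_one)
lemma D_set_zero: "DD z = {}" by (auto simp: D_set_iff ultrafilter_zero)
lemma D_set_not_idem: "e \<notin> idem m \<Longrightarrow> DD e = {}" by (auto simp: D_set_iff dest: ultrafilter_idem)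
lemma D_set_mult: "e \<in> idem m \<Longrightarrow> f \<in> idem m \<Longrightarrow> DD (e \<odot> f) = DD e \<inter> DD f"
  by (auto simp: D_set_iff ultrafilter_mult_iff)
lemma D_set_sup: "e \<in> idem m \<Longrightarrow> f \<in> idem m \<Longrightarrow> DD (idem_sup e f) = DD e \<union> DD f"
  by (auto simp: D_set_iff ultrafilter_sup_iff)
lemma D_set_compl: "e \<in> idem m \<Longrightarrow> DD (idem_compl e) = UF - DD e"
  by (auto simp: D_set_iff UF_def ultrafilter_compl_iff)

lemma D_set_subsetD:
  assumes e: "e \<in> idem m" and f: "f \<in> idem m" and sub: "DD e \<subseteq> DD f"
  shows "e \<odot> f = e"
proof (rule ccontr)
  assume ne: "e \<odot> f \<noteq> e"
  have cf: "idem_compl f \<in> idem m" using idem_complement f by auto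
  have "e \<odot> idem_compl f \<noteq> z"
  proof
    assume ez: "e \<odot> idem_compl f = z"
    have "e = e \<odot> idem_sup f (idem_compl f)" using idem_complement(3)[OF f] by simp
    also have "\<dots> = idem_sup (e \<odot> f) (e \<odot> idem_compl f)" using idem_mult_sup_distrib e f cf by auto
    also have "\<dots> = e \<odot> f" using ez idem_sup_zero e f by simp
    finally show False using ne by simp
  qed
  then obtain \<xi> where "ultra \<xi>" "e \<odot> idem_compl f \<in> \<xi>" using ultrafilter_containing[of "e \<odot> idem_compl f"] e cf by auto
  then have "\<xi> \<in> DD e" "\<xi> \<notin> DD f" using ultrafilter_mult_iff[of \<xi> e "idem_compl f"] ultrafilter_compl_iff[of \<xi> f] e f cf
    by (auto simp: D_set_iff)
  then show False using sub by auto
qed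

lemma D_set_subset_iff: "e \<in> idem m \<Longrightarrow> f \<in> idem m \<Longrightarrow> DD e \<subseteq> DD f \<longleftrightarrow> e \<odot> f = e"
  using D_set_subsetD D_set_mult[of e f] by auto

lemma D_set_inj:
  assumes "e \<in> idem m" "f \<in> idem m" "DD e = DD f"
  shows "e = f"
proof -
  have "e \<odot> f = e" "f \<odot> e = f" using D_set_subset_iff assms by auto
  then show ?thesis using idem_commute[OF assms(1,2)] by simp
qed

lemma D_set_empty_iff: "e \<in> idem m \<Longrightarrow> DD e = {} \<longleftrightarrow> e = z"
  using D_set_inj[of e z] D_set_zero by auto

lemma topspace_unit_top: "topspace TT = UF"
proof -
  have "\<Union>(range DD) = UF" using D_set_subset D_set_one by auto
  then show ?thesis unfolding unit_top_def by simp
qed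

lemma openin_unit_top: "openin TT U \<longleftrightarrow> generate_topology_on (range DD) U"
  unfolding unit_top_def by (rule openin_topology_generated_by_iff)

lemma openin_D_set: "openin TT (DD e)"
  unfolding openin_unit_top by (rule generate_topology_on.Basis) auto

lemma closedin_D_set: "closedin TT (DD e)"
proof (cases "e \<in> idem m")
  case True
  then show ?thesis unfolding closedin_def topspace_unit_top using D_set_subset openin_D_set[of "idem_compl e"] D_set_compl[OF True] by auto
next
  case False
  then show ?thesis using D_set_not_idem by simp
qed

lemma generate_topology_D_set_basis: "generate_topology_on (range DD) U \<Longrightarrow> \<xi> \<in> U \<Longrightarrow> \<exists>e\<in>idem m. \<xi> \<in> DD e \<and> DD e \<subseteq> U"
proof (induction arbitrary: \<xi> rule: generate_topology_on.induct)
  case Empty then show ?case by simp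
next
  case (Int a b)
  then obtain e f where e: "e \<in> idem m" "\<xi> \<in> DD e" "DD e \<subseteq> a" and f: "f \<in> idem m" "\<xi> \<in> DD f" "DD f \<subseteq> b"
    by blast
  then show ?case using D_set_mult[OF e(1) f(1)] by (intro bexI[of _ "e \<odot> f"]) auto
next
  case (UN K)
  then show ?case by blast
next
  case (Basis s)
  then obtain e where s: "s = DD e" by auto
  then have "e \<in> idem m" using Basis D_set_not_idem by auto
  then show ?case using s Basis by auto
qed

lemma openin_unit_top_basis: "openin TT U \<Longrightarrow> \<xi> \<in> U \<Longrightarrow> \<exists>e\<in>idem m. \<xi> \<in> DD e \<and> DD e \<subseteq> U"
  using generate_topology_D_set_basis openin_unit_top by auto

lemma openin_Union_D_set: "openin TT U \<Longrightarrow> U = \<Union>(DD ` {e \<in> idem m. DD e \<subseteq> U})"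
  using openin_unit_top_basis by blast

lemma D_set_cover_finite:
  assumes C: "C \<subseteq> idem m" and cov: "UF \<subseteq> \<Union>(DD ` C)"
  shows "\<exists>F\<subseteq>C. finite F \<and> UF \<subseteq> \<Union>(DD ` F)"
proof (cases "z \<in> generated_filter (idem_compl ` C)")
  case False
  have A: "idem_compl ` C \<subseteq> idem m" using C idem_complement by auto
  then have "filt (generated_filter (idem_compl ` C))" using is_filter_generated_filter False by auto
  then obtain \<xi> where U: "ultra \<xi>" and sub: "generated_filter (idem_compl ` C) \<subseteq> \<xi>" using ultrafilter_extends by blast
  then have "\<xi> \<in> UF" by (simp add: UF_def)
  then obtain c where c: "c \<in> C" "c \<in> \<xi>" using cov by (auto simp: D_set_iff)
  have "idem_compl c \<in> \<xi>" using sub subset_generated_filter[OF A] c by auto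
  then show ?thesis using ultrafilter_compl_iff[OF U] c C by auto
next
  case True
  then obtain xs where xs: "set xs \<subseteq> idem_compl ` C" "mprod xs = z" unfolding generated_filter_def by auto
  then obtain F where F: "F \<subseteq> C" "finite F" "set xs = idem_compl ` F"
    using finite_subset_image[of "set xs" idem_compl C] by auto
  have "UF \<subseteq> \<Union>(DD ` F)"
  proof
    fix \<xi> assume "\<xi> \<in> UF"
    then have U: "ultra \<xi>" by (simp add: UF_def)
    show "\<xi> \<in> \<Union>(DD ` F)"
    proof (rule ccontr)
      assume "\<xi> \<notin> \<Union>(DD ` F)"
      then have "\<forall>c\<in>F. idem_compl c \<in> \<xi>" using ultrafilter_compl_iff[OF U] F C U by (auto simp: D_set_iff)
      then have "set xs \<subseteq> \<xi>" using F by auto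
      then have "mprod xs \<in> \<xi>" using filter_mprod ultrafilter_filter[OF U] by auto
      then show False using xs ultrafilter_zero[OF U] by simp
    qed
  qed
  then show ?thesis using F by auto
qed

lemma compact_space_unit_top: "compact_space TT"
  unfolding compact_space_alt topspace_unit_top
proof (intro allI impI)
  fix \<U> assume H: "(\<forall>U\<in>\<U>. openin TT U) \<and> UF \<subseteq> \<Union>\<U>"
  let ?C = "{e \<in> idem m. \<exists>U\<in>\<U>. DD e \<subseteq> U}"
  have "UF \<subseteq> \<Union>(DD ` ?C)"
  proof
    fix \<xi> assume "\<xi> \<in> UF"
    then obtain U where "U \<in> \<U>" "\<xi> \<in> U" using H by auto
    then obtain e where "e \<in> idem m" "\<xi> \<in> DD e" "DD e \<subseteq> U" using openin_unit_top_basis H by blast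
    then show "\<xi> \<in> \<Union>(DD ` ?C)" using \<open>U \<in> \<U>\<close> by blast
  qed
  then obtain F where F: "F \<subseteq> ?C" "finite F" "UF \<subseteq> \<Union>(DD ` F)" using D_set_cover_finite[of ?C] by auto
  define u where "u e = (SOME U. U \<in> \<U> \<and> DD e \<subseteq> U)" for e
  have u: "u e \<in> \<U> \<and> DD e \<subseteq> u e" if "e \<in> F" for e
    unfolding u_def by (rule someI_ex) (use that F in auto)
  show "\<exists>\<F>. finite \<F> \<and> \<F> \<subseteq> \<U> \<and> UF \<subseteq> \<Union>\<F>"
  proof (intro exI[of _ "u ` F"] conjI)
    show "finite (u ` F)" using F by simp
    show "u ` F \<subseteq> \<U>" using u by auto
    show "UF \<subseteq> \<Union>(u ` F)"
    proof
      fix \<xi> assume "\<xi> \<in> UF"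
      then obtain e where "e \<in> F" "\<xi> \<in> DD e" using F by auto
      then show "\<xi> \<in> \<Union>(u ` F)" using u[of e] by auto
    qed
  qed
qed

section \<open>The action on ultrafilters\<close>

definition conj :: "'a \<Rightarrow> 'a \<Rightarrow> 'a" where
  "conj s e = s \<odot> (e \<odot> st s)"

lemma conj_alt: "e \<in> idem m \<Longrightarrow> conj s e = (s \<odot> e) \<odot> st (s \<odot> e)"
  unfolding conj_def by (simp add: st_mult mult_assoc idem_iff flip: mult_assoc[of e e])

lemma conj_mult:
  assumes "a \<in> idem m" "b \<in> idem m"
  shows "conj s a \<odot> conj s b = conj s (a \<odot> b)"
proof -
  have "conj s a \<odot> conj s b = s \<odot> (a \<odot> (st s \<odot> s) \<odot> b) \<odot> st s" unfolding conj_def by (simp add: mult_assoc)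
  also have "\<dots> = s \<odot> ((st s \<odot> s) \<odot> a \<odot> b) \<odot> st s" using idem_commute[of a "st s \<odot> s"] assms by simp
  also have "\<dots> = (s \<odot> (st s \<odot> s)) \<odot> (a \<odot> b) \<odot> st s" by (simp add: mult_assoc)
  also have "\<dots> = conj s (a \<odot> b)" unfolding conj_def by (simp add: mult_st_mult mult_assoc)
  finally show ?thesis .
qed

lemma conj_idem[simp]: "e \<in> idem m \<Longrightarrow> conj s e \<in> idem m"
  using conj_mult[of e e s] by (simp add: idem_iff)

lemma conj_mono: "a \<in> idem m \<Longrightarrow> b \<in> idem m \<Longrightarrow> a \<odot> b = a \<Longrightarrow> conj s a \<odot> conj s b = conj s a"
  by (simp add: conj_mult)

lemma conj_conj: "e \<in> idem m \<Longrightarrow> conj (st s) (conj s e) = e \<odot> (st s \<odot> s)"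
proof -
  assume e: "e \<in> idem m"
  have "conj (st s) (conj s e) = (st s \<odot> s) \<odot> e \<odot> (st s \<odot> s)" unfolding conj_def by (simp add: mult_assoc)
  also have "\<dots> = e \<odot> (st s \<odot> s) \<odot> (st s \<odot> s)" using idem_commute[of e "st s \<odot> s"] e by simp
  also have "\<dots> = e \<odot> (st s \<odot> s)" using st_mult_idem by (simp add: mult_assoc idem_iff)
  finally show ?thesis .
qed

lemma conj_dom: "conj s (st s \<odot> s) = s \<odot> st s"
  unfolding conj_def by (simp add: mult_assoc st_mult_st)

lemma conj_zero[simp]: "conj s z = z" unfolding conj_def by simp

lemma theta_iff: "f \<in> theta m st s \<xi> \<longleftrightarrow> f \<in> idem m \<and> (\<exists>e\<in>\<xi>. nat_le m st (conj s e) f)"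
  unfolding theta_def conj_def by auto

lemma theta_iff_filter: "filt \<xi> \<Longrightarrow> f \<in> theta m st s \<xi> \<longleftrightarrow> f \<in> idem m \<and> (\<exists>e\<in>\<xi>. conj s e \<odot> f = conj s e)"
  unfolding theta_iff using nat_le_idem_iff filter_idem conj_idem by metis

lemma theta_mem: "filt \<xi> \<Longrightarrow> e \<in> \<xi> \<Longrightarrow> conj s e \<in> theta m st s \<xi>"
  unfolding theta_iff_filter using filter_idem by (auto simp: idem_iff[symmetric] intro!: bexI[of _ e])

lemma theta_mono: "\<xi> \<subseteq> \<eta> \<Longrightarrow> theta m st s \<xi> \<subseteq> theta m st s \<eta>"
  unfolding subset_iff theta_iff by blast

lemma theta_filter:
  assumes F: "filt F" and ss: "st s \<odot> s \<in> F"
  shows "filt (theta m st s F)"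
  unfolding is_filter_E_def
proof (intro conjI ballI impI)
  show "theta m st s F \<subseteq> idem m" by (auto simp: theta_iff)
  show "theta m st s F \<noteq> {}" using theta_mem[OF F ss] by auto
  show "z \<notin> theta m st s F"
  proof
    assume "z \<in> theta m st s F"
    then obtain e where e: "e \<in> F" "conj s e \<odot> z = conj s e" using theta_iff_filter[OF F] by auto
    have ei: "e \<in> idem m" using e F filter_idem by auto
    have "conj s e = z" using e by simp
    then have "e \<odot> (st s \<odot> s) = z" using conj_conj[OF ei, of s] by simp
    moreover have "e \<odot> (st s \<odot> s) \<in> F" using filter_mult[OF F e(1) ss] .
    ultimately show False using filter_zero[OF F] by simp
  qed
next
  fix f g assume f: "f \<in> theta m st s F" and g: "g \<in> theta m st s F"
  then obtain e e' where e: "e \<in> F" "conj s e \<odot> f = conj s e" and e': "e' \<in> F" "conj s e' \<odot> g = conj s e'"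
    and fi: "f \<in> idem m" and gi: "g \<in> idem m" using theta_iff_filter[OF F] by auto
  have ei: "e \<in> idem m" "e' \<in> idem m" using e e' F filter_idem by auto
  have "conj s (e \<odot> e') \<odot> (f \<odot> g) = conj s (e \<odot> e')"
    using idem_mult_mono[of "conj s e" "conj s e'" f g] e e' ei fi gi by (simp add: conj_mult)
  then show "f \<odot> g \<in> theta m st s F" using theta_iff_filter[OF F] filter_mult[OF F e(1) e'(1)] fi gi by auto
next
  fix f g assume f: "f \<in> theta m st s F" and g: "g \<in> idem m" and le: "nat_le m st f g"
  then obtain e where e: "e \<in> F" "conj s e \<odot> f = conj s e" and fi: "f \<in> idem m" using theta_iff_filter[OF F] by auto
  have "f \<odot> g = f" using le nat_le_idem_iff fi g by auto
  then have "conj s e \<odot> g = conj s e" using e idem_le_trans by metis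
  then show "g \<in> theta m st s F" using theta_iff_filter[OF F] e g by auto
qed

lemma theta_ran: "filt F \<Longrightarrow> st s \<odot> s \<in> F \<Longrightarrow> s \<odot> st s \<in> theta m st s F"
  using theta_mem[of F "st s \<odot> s" s] conj_dom by simp

lemma theta_theta_st:
  assumes F: "filt F" and ss: "st s \<odot> s \<in> F"
  shows "theta m st (st s) (theta m st s F) = F"
proof
  have TF: "filt (theta m st s F)" using theta_filter[OF F ss] .
  show "theta m st (st s) (theta m st s F) \<subseteq> F"
  proof
    fix f assume "f \<in> theta m st (st s) (theta m st s F)"
    then obtain g where fi: "f \<in> idem m" and g: "g \<in> theta m st s F" "conj (st s) g \<odot> f = conj (st s) g"
      using theta_iff_filter[OF TF] by auto
    obtain e where e: "e \<in> F" "conj s e \<odot> g = conj s e" and gi: "g \<in> idem m" using g theta_iff_filter[OF F] by auto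
    have ei: "e \<in> idem m" using e F filter_idem by auto
    have "conj (st s) (conj s e) \<odot> conj (st s) g = conj (st s) (conj s e)" using conj_mono e ei gi by simp
    then have "conj (st s) (conj s e) \<odot> f = conj (st s) (conj s e)" using g idem_le_trans by metis
    then have "(e \<odot> (st s \<odot> s)) \<odot> f = e \<odot> (st s \<odot> s)" using conj_conj[OF ei] by simp
    moreover have "e \<odot> (st s \<odot> s) \<in> F" using filter_mult[OF F e(1) ss] .
    ultimately show "f \<in> F" using filter_upward[OF F] fi by blast
  qed
  show "F \<subseteq> theta m st (st s) (theta m st s F)"
  proof
    fix f assume f: "f \<in> F"
    have fi: "f \<in> idem m" using f F filter_idem by auto
    let ?e = "f \<odot> (st s \<odot> s)"
    have e: "?e \<in> F" using filter_mult[OF F f ss] .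
    have ei: "?e \<in> idem m" using fi by simp
    have "conj s ?e \<in> theta m st s F" using theta_mem[OF F e] .
    moreover have "conj (st s) (conj s ?e) = ?e" using conj_conj[OF ei]
      by (simp add: mult_assoc mult_st_mult)
    moreover have "?e \<odot> f = ?e" using idem_mult_le_left[OF fi, of "st s \<odot> s"] by simp
    ultimately show "f \<in> theta m st (st s) (theta m st s F)"
      using theta_iff_filter[OF TF] fi by metis
  qed
qed

lemma theta_ultrafilter:
  assumes U: "ultra \<xi>" and ss: "st s \<odot> s \<in> \<xi>"
  shows "ultra (theta m st s \<xi>)"
proof -
  have F: "filt \<xi>" using U ultrafilter_filter by auto
  have TF: "filt (theta m st s \<xi>)" using theta_filter[OF F ss] .
  show ?thesis unfolding is_ultrafilter_E_def
  proof (intro conjI allI impI)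
    show "filt (theta m st s \<xi>)" by fact
    fix G assume G: "filt G \<and> theta m st s \<xi> \<subseteq> G"
    have sG: "s \<odot> st s \<in> G" using G theta_ran[OF F ss] by auto
    have sG': "st (st s) \<odot> st s \<in> G" using sG by simp
    have FG: "filt (theta m st (st s) G)" using theta_filter[OF _ sG'] G by auto
    have "\<xi> \<subseteq> theta m st (st s) G"
      using theta_mono[of "theta m st s \<xi>" G "st s"] G theta_theta_st[OF F ss] by auto
    then have "theta m st (st s) G = \<xi>" using U FG unfolding is_ultrafilter_E_def by auto
    then show "G = theta m st s \<xi>" using theta_theta_st[OF _ sG'] G by auto
  qed
qed

lemma theta_image_D_set:
  assumes f: "f \<in> idem m" "f \<odot> (st s \<odot> s) = f"
  shows "theta m st s ` DD f = DD (conj s f)"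
proof
  show "theta m st s ` DD f \<subseteq> DD (conj s f)"
  proof
    fix \<eta> assume "\<eta> \<in> theta m st s ` DD f"
    then obtain \<xi> where \<xi>: "ultra \<xi>" "f \<in> \<xi>" and \<eta>: "\<eta> = theta m st s \<xi>" by (auto simp: D_set_iff)
    have ss: "st s \<odot> s \<in> \<xi>" using \<xi> f filter_upward[OF ultrafilter_filter[OF \<xi>(1)] \<xi>(2)] 
      by (metis filter_multD st_mult_idem(1) ultrafilter_filter)
    show "\<eta> \<in> DD (conj s f)" using theta_ultrafilter[OF \<xi>(1) ss] theta_mem[OF ultrafilter_filter[OF \<xi>(1)] \<xi>(2)] \<eta>
      by (simp add: D_set_iff)
  qed
  show "DD (conj s f) \<subseteq> theta m st s ` DD f"
  proof
    fix \<eta> assume "\<eta> \<in> DD (conj s f)"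
    then have \<eta>: "ultra \<eta>" "conj s f \<in> \<eta>" by (auto simp: D_set_iff)
    have "conj s f \<odot> (s \<odot> st s) = conj s f" using conj_mono[of f "st s \<odot> s" s] f conj_dom by simp
    then have ss: "st (st s) \<odot> st s \<in> \<eta>" using filter_upward[OF ultrafilter_filter[OF \<eta>(1)] \<eta>(2)] by simp
    let ?\<xi> = "theta m st (st s) \<eta>"
    have U: "ultra ?\<xi>" using theta_ultrafilter[OF \<eta>(1) ss] .
    have "conj (st s) (conj s f) \<in> ?\<xi>" using theta_mem[OF ultrafilter_filter[OF \<eta>(1)] \<eta>(2)] .
    then have "f \<in> ?\<xi>" using conj_conj[OF f(1)] f by simp
    moreover have "theta m st s ?\<xi> = \<eta>" using theta_theta_st[OF ultrafilter_filter[OF \<eta>(1)] ss] by simp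
    ultimately show "\<eta> \<in> theta m st s ` DD f" using U by (auto simp: D_set_iff)
  qed
qed

lemma inj_on_theta: "inj_on (theta m st s) (DD (st s \<odot> s))"
  by (rule inj_on_inverseI[of _ "theta m st (st s)"]) (auto simp: D_set_iff theta_theta_st ultrafilter_filter)

lemma theta_cong_subset:
  assumes F: "filt \<xi>" and c: "c \<in> \<xi>" and sc: "s \<odot> c = t \<odot> c"
  shows "theta m st s \<xi> \<subseteq> theta m st t \<xi>"
proof
  fix f assume "f \<in> theta m st s \<xi>"
  then obtain e where fi: "f \<in> idem m" and e: "e \<in> \<xi>" "conj s e \<odot> f = conj s e" using theta_iff_filter[OF F] by auto
  have ei: "e \<in> idem m" and ci: "c \<in> idem m" using e c F filter_idem by auto
  let ?x = "e \<odot> c"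
  have "t \<odot> ?x = s \<odot> ?x"
  proof -
    have "t \<odot> ?x = t \<odot> (c \<odot> e)" using idem_commute[OF ei ci] by simp
    also have "\<dots> = (s \<odot> c) \<odot> e" using sc by (simp add: mult_assoc)
    also have "\<dots> = s \<odot> ?x" using idem_commute[OF ei ci] by (simp add: mult_assoc)
    finally show ?thesis .
  qed
  then have "conj t ?x = conj s ?x" using conj_alt ei ci by simp
  also have "conj s ?x \<odot> conj s e = conj s ?x" using conj_mono idem_mult_le_left ei ci by simp
  finally have "conj t ?x \<odot> f = conj t ?x" using e idem_le_trans \<open>conj t ?x = conj s ?x\<close> by metis
  then show "f \<in> theta m st t \<xi>" using theta_iff_filter[OF F] fi filter_mult[OF F e(1) c] by blast
qed

section \<open>Germs and bisections\<close>

lemma germ_iff: "p \<in> germ m st z s \<xi> \<longleftrightarrow> (\<exists>t. p = (t, \<xi>) \<and> \<xi> \<in> DD (st t \<odot> t) \<and> (\<exists>e\<in>\<xi>. s \<odot> e = t \<odot> e))"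
  unfolding germ_def by auto

lemma germ_mem: "\<xi> \<in> DD (st s \<odot> s) \<Longrightarrow> (s, \<xi>) \<in> germ m st z s \<xi>"
  unfolding germ_iff by (auto simp: D_set_iff intro: ultrafilter_one)

lemma germ_d_germ: "\<xi> \<in> DD (st s \<odot> s) \<Longrightarrow> germ_d (germ m st z s \<xi>) = \<xi>"
  unfolding germ_d_def using germ_mem[of \<xi> s] by (metis germ_iff someI snd_conv)

lemma germ_cong_subset:
  assumes U: "ultra \<xi>" and c: "c \<in> \<xi>" and sc: "s \<odot> c = t \<odot> c"
  shows "germ m st z s \<xi> \<subseteq> germ m st z t \<xi>"
proof
  fix p assume "p \<in> germ m st z s \<xi>"
  then obtain u e where p: "p = (u, \<xi>)" "\<xi> \<in> DD (st u \<odot> u)" and e: "e \<in> \<xi>" "s \<odot> e = u \<odot> e"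
    unfolding germ_iff by auto
  have ei: "e \<in> idem m" and ci: "c \<in> idem m" using e c U ultrafilter_idem by auto
  have "t \<odot> (c \<odot> e) = (s \<odot> c) \<odot> e" using sc by (simp add: mult_assoc)
  also have "\<dots> = s \<odot> (e \<odot> c)" using idem_commute[OF ei ci] by (simp add: mult_assoc)
  also have "\<dots> = (s \<odot> e) \<odot> c" by (simp add: mult_assoc)
  also have "\<dots> = u \<odot> (e \<odot> c)" using e by (simp add: mult_assoc)
  also have "\<dots> = u \<odot> (c \<odot> e)" using idem_commute[OF ei ci] by simp
  finally have "t \<odot> (c \<odot> e) = u \<odot> (c \<odot> e)" .
  moreover have "c \<odot> e \<in> \<xi>" using ultrafilter_filter[OF U] c e filter_mult by auto
  ultimately show "p \<in> germ m st z t \<xi>" unfolding germ_iff using p by blast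
qed

lemma germ_cong: "ultra \<xi> \<Longrightarrow> c \<in> \<xi> \<Longrightarrow> s \<odot> c = t \<odot> c \<Longrightarrow> germ m st z s \<xi> = germ m st z t \<xi>"
  using germ_cong_subset[of \<xi> c s t] germ_cong_subset[of \<xi> c t s] by auto

lemma germ_eqD: "\<xi> \<in> DD (st t \<odot> t) \<Longrightarrow> germ m st z s \<xi> = germ m st z t \<xi> \<Longrightarrow> \<exists>c\<in>\<xi>. s \<odot> c = t \<odot> c"
proof -
  assume a: "\<xi> \<in> DD (st t \<odot> t)" and b: "germ m st z s \<xi> = germ m st z t \<xi>"
  have "(t, \<xi>) \<in> germ m st z s \<xi>" using germ_mem[OF a] b by simp
  then obtain t' where "(t, \<xi>) = (t', \<xi>)" "\<exists>e\<in>\<xi>. s \<odot> e = t' \<odot> e" unfolding germ_iff by blast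
  then show ?thesis by auto
qed

lemma germ_r_germ:
  assumes \<xi>: "\<xi> \<in> DD (st s \<odot> s)"
  shows "germ_r m st (germ m st z s \<xi>) = theta m st s \<xi>"
proof -
  let ?p = "SOME p. p \<in> germ m st z s \<xi>"
  have "?p \<in> germ m st z s \<xi>" using germ_mem[OF \<xi>] by (rule someI)
  then obtain t e where p: "?p = (t, \<xi>)" and e: "e \<in> \<xi>" "s \<odot> e = t \<odot> e" unfolding germ_iff by auto
  have U: "ultra \<xi>" using \<xi> by (simp add: D_set_iff)
  have "theta m st t \<xi> = theta m st s \<xi>"
    using theta_cong_subset[OF ultrafilter_filter[OF U] e(1)] e(2) by (metis subset_antisym)
  then show ?thesis unfolding germ_r_def Let_def p by simp
qed

abbreviation "GTop \<equiv> groupoid_top m st z"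
abbreviation "groupoid_basis \<equiv> {Theta m st z s U | s U. openin TT U \<and> U \<subseteq> DD (st s \<odot> s)}"

lemma openin_groupoid_top: "openin GTop W \<longleftrightarrow> generate_topology_on groupoid_basis W"
  unfolding groupoid_top_def by (rule openin_topology_generated_by_iff)

lemma Theta_iff: "g \<in> Theta m st z s U \<longleftrightarrow> (\<exists>\<xi>\<in>U. g = germ m st z s \<xi>)"
  unfolding Theta_def by auto

lemma D_set_subset_dom: "e \<in> idem m \<Longrightarrow> e \<odot> (st s \<odot> s) = e \<Longrightarrow> DD e \<subseteq> DD (st s \<odot> s)"
  using D_set_subset_iff[of e "st s \<odot> s"] by simp

definition slice_nbhd :: "'a \<Rightarrow> 'a \<Rightarrow> ('a \<times> 'a set) set \<Rightarrow> ('a \<times> 'a set) set set \<Rightarrow> bool" where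
  "slice_nbhd s e g W \<longleftrightarrow> e \<in> idem m \<and> e \<odot> (st s \<odot> s) = e \<and>
     (\<exists>\<xi>\<in>DD e. g = germ m st z s \<xi>) \<and> Theta m st z s (DD e) \<subseteq> W"

lemma slice_nbhd_Theta:
  assumes "openin TT V" "V \<subseteq> DD (st s \<odot> s)" "g \<in> Theta m st z s V"
  shows "\<exists>e. slice_nbhd s e g (Theta m st z s V)"
proof -
  obtain \<xi> where \<xi>: "\<xi> \<in> V" "g = germ m st z s \<xi>" using assms(3) Theta_iff by auto
  obtain e where e: "e \<in> idem m" "\<xi> \<in> DD e" "DD e \<subseteq> V"
    using openin_unit_top_basis[OF assms(1) \<xi>(1)] by auto
  let ?e = "e \<odot> (st s \<odot> s)"
  have De: "DD ?e = DD e" using D_set_mult[OF e(1) st_mult_idem(1)] e assms(2) by auto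
  have "?e \<odot> (st s \<odot> s) = ?e" using idem_mult_le_right[OF e(1) st_mult_idem(1)] .
  moreover have "Theta m st z s (DD ?e) \<subseteq> Theta m st z s V"
    unfolding Theta_iff subset_iff using De e(3) by blast
  ultimately show ?thesis using e De \<xi> unfolding slice_nbhd_def by (intro exI[of _ ?e]) auto
qed

text \<open>Two slice neighbourhoods of the same germ \<open>[s\<^sub>1, \<xi>] = [s\<^sub>2, \<xi>]\<close> agree near \<open>\<xi>\<close>,
i.e.\ \<open>s\<^sub>1 c = s\<^sub>2 c\<close> for some \<open>c \<in> \<xi>\<close>, so cutting down to \<open>D\<^sub>c\<close> gives a common one.\<close>

lemma slice_nbhd_Int:
  assumes 1: "slice_nbhd s1 e1 g a" and 2: "slice_nbhd s2 e2 g b"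
  shows "\<exists>e. slice_nbhd s1 e g (a \<inter> b)"
proof -
  obtain \<xi>1 \<xi>2 where 1: "e1 \<in> idem m" "e1 \<odot> (st s1 \<odot> s1) = e1" "\<xi>1 \<in> DD e1" "g = germ m st z s1 \<xi>1"
      "Theta m st z s1 (DD e1) \<subseteq> a"
    and 2: "e2 \<in> idem m" "e2 \<odot> (st s2 \<odot> s2) = e2" "\<xi>2 \<in> DD e2" "g = germ m st z s2 \<xi>2"
      "Theta m st z s2 (DD e2) \<subseteq> b"
    using 1 2 unfolding slice_nbhd_def by blast
  have d1: "\<xi>1 \<in> DD (st s1 \<odot> s1)" using D_set_subset_dom[OF 1(1,2)] 1(3) by auto
  have d2: "\<xi>2 \<in> DD (st s2 \<odot> s2)" using D_set_subset_dom[OF 2(1,2)] 2(3) by auto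
  have "\<xi>1 = \<xi>2" using germ_d_germ[OF d1] germ_d_germ[OF d2] 1(4) 2(4) by simp
  then obtain c where c: "c \<in> \<xi>1" "s2 \<odot> c = s1 \<odot> c" using germ_eqD[OF d1, of s2] 1(4) 2(4) by auto
  have U: "ultra \<xi>1" using 1(3) by (simp add: D_set_iff)
  have ci: "c \<in> idem m" using c U ultrafilter_idem by auto
  let ?e = "e1 \<odot> e2 \<odot> c"
  have ei: "?e \<in> idem m" using 1(1) 2(1) ci by simp
  have De: "DD ?e = DD e1 \<inter> DD e2 \<inter> DD c" using D_set_mult 1(1) 2(1) ci by simp
  have "DD ?e \<subseteq> DD (st s1 \<odot> s1)" using De D_set_subset_dom[OF 1(1,2)] by auto
  then have le: "?e \<odot> (st s1 \<odot> s1) = ?e" using D_set_subset_iff[OF ei st_mult_idem(1)] by simp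
  have "\<xi>1 \<in> DD ?e" using De 1(3) 2(3) \<open>\<xi>1 = \<xi>2\<close> c U by (auto simp: D_set_iff)
  moreover have "Theta m st z s1 (DD ?e) \<subseteq> a \<inter> b"
  proof
    fix h assume "h \<in> Theta m st z s1 (DD ?e)"
    then obtain \<eta> where \<eta>: "\<eta> \<in> DD ?e" "h = germ m st z s1 \<eta>" by (auto simp: Theta_iff)
    have "\<eta> \<in> DD e1" "\<eta> \<in> DD e2" "\<eta> \<in> DD c" using \<eta>(1) De by auto
    have "h \<in> Theta m st z s1 (DD e1)" unfolding Theta_iff using \<eta>(2) \<open>\<eta> \<in> DD e1\<close> by blast
    then have "h \<in> a" using 1(5) by blast
    moreover have "germ m st z s1 \<eta> = germ m st z s2 \<eta>"
      using germ_cong[of \<eta> c s2 s1] \<open>\<eta> \<in> DD c\<close> c by (auto simp: D_set_iff)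
    then have "h \<in> Theta m st z s2 (DD e2)" unfolding Theta_iff using \<eta>(2) \<open>\<eta> \<in> DD e2\<close> by auto
    then have "h \<in> b" using 2(5) by blast
    ultimately show "h \<in> a \<inter> b" by blast
  qed
  ultimately show ?thesis using ei le 1(4) unfolding slice_nbhd_def by (intro exI[of _ ?e]) auto
qed

lemma groupoid_top_local_basis:
  "generate_topology_on groupoid_basis W \<Longrightarrow> g \<in> W \<Longrightarrow> \<exists>s e. slice_nbhd s e g W"
proof (induction arbitrary: g rule: generate_topology_on.induct)
  case Empty
  then show ?case by simp
next
  case (UN K)
  then obtain k where "k \<in> K" "g \<in> k" by auto
  with UN.IH[of k g] show ?case by (auto simp: slice_nbhd_def)
next
  case (Basis W)
  then show ?case using slice_nbhd_Theta by blast
next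
  case (Int a b)
  then show ?case using slice_nbhd_Int by blast
qed

lemma Theta_dom_bisection:
  fixes s
  defines "U0 \<equiv> Theta m st z s (DD (st s \<odot> s))"
  shows "bisection m st z U0" "germ_d ` U0 = DD (st s \<odot> s)" "germ_r m st ` U0 = DD (s \<odot> st s)"
proof -
  have gd: "germ_d ` U0 = DD (st s \<odot> s)" unfolding U0_def Theta_def
    using germ_d_germ by (auto simp: image_iff)
  have gr: "germ_r m st ` U0 = theta m st s ` DD (st s \<odot> s)" unfolding U0_def Theta_def
    using germ_r_germ by (auto simp: image_iff)
  have "openin GTop U0" unfolding openin_groupoid_top U0_def
    by (rule generate_topology_on.Basis) (use openin_D_set in blast)
  moreover have "inj_on germ_d U0"
  proof (rule inj_onI)
    fix x y assume "x \<in> U0" "y \<in> U0" "germ_d x = germ_d y"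
    then obtain \<xi> \<xi>' where "\<xi> \<in> DD (st s \<odot> s)" "x = germ m st z s \<xi>" "\<xi>' \<in> DD (st s \<odot> s)" "y = germ m st z s \<xi>'"
      "germ_d x = germ_d y" unfolding U0_def Theta_iff by blast
    then show "x = y" using germ_d_germ by metis
  qed
  moreover have "inj_on (germ_r m st) U0"
  proof (rule inj_onI)
    fix x y assume "x \<in> U0" "y \<in> U0" "germ_r m st x = germ_r m st y"
    then obtain \<xi> \<xi>' where a: "\<xi> \<in> DD (st s \<odot> s)" "x = germ m st z s \<xi>" "\<xi>' \<in> DD (st s \<odot> s)" "y = germ m st z s \<xi>'"
      "germ_r m st x = germ_r m st y" unfolding U0_def Theta_iff by blast
    then have "theta m st s \<xi> = theta m st s \<xi>'" using germ_r_germ by metis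
    then have "\<xi> = \<xi>'" using inj_on_theta a unfolding inj_on_def by blast
    then show "x = y" using a by simp
  qed
  ultimately show "bisection m st z U0" unfolding bisection_def by auto
  show "germ_d ` U0 = DD (st s \<odot> s)" by fact
  have "theta m st s ` DD (st s \<odot> s) = DD (conj s (st s \<odot> s))"
    by (rule theta_image_D_set) (simp_all add: idem_iff[symmetric])
  then show "germ_r m st ` U0 = DD (s \<odot> st s)" using gr conj_dom by simp
qed

lemma germ_slice:
  assumes "e \<in> idem m" "e \<odot> (st s \<odot> s) = e" "\<xi> \<in> DD e"
  shows "germ_d (germ m st z s \<xi>) = \<xi>" "germ_r m st (germ m st z s \<xi>) = theta m st s \<xi>"
  using D_set_subset_dom[OF assms(1,2)] assms(3) germ_d_germ germ_r_germ by auto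

lemma open_countable_slices:
  assumes "openin GTop U"
  shows "\<exists>e s :: nat \<Rightarrow> 'a. (\<forall>n. e n \<in> idem m \<and> e n \<odot> (st (s n) \<odot> s n) = e n) \<and>
    (\<forall>n. \<forall>\<xi>\<in>DD (e n). germ m st z (s n) \<xi> \<in> U) \<and> germ_d ` U \<subseteq> (\<Union>n. DD (e n))"
proof -
  define P where "P = {(s, e). e \<in> idem m \<and> e \<odot> (st s \<odot> s) = e \<and> Theta m st z s (DD e) \<subseteq> U}"
  have "(one, z) \<in> P" by (simp add: P_def D_set_zero Theta_def)
  then have "P \<noteq> {}" by blast
  define p where "p = from_nat_into P"
  have pP: "p n \<in> P" for n
    unfolding p_def using from_nat_into[OF \<open>P \<noteq> {}\<close>] .
  have P_range: "P = range p"
    unfolding p_def by (rule range_from_nat_into[OF \<open>P \<noteq> {}\<close> countableI_type, symmetric])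
  define s e where "s n = fst (p n)" and "e n = snd (p n)" for n
  have se: "e n \<in> idem m" "e n \<odot> (st (s n) \<odot> s n) = e n" "Theta m st z (s n) (DD (e n)) \<subseteq> U" for n
    using pP[of n] unfolding P_def s_def e_def by (auto split: prod.splits)
  have cover: "germ_d ` U \<subseteq> (\<Union>n. DD (e n))"
  proof
    fix \<xi> assume "\<xi> \<in> germ_d ` U"
    then obtain g where g: "g \<in> U" "\<xi> = germ_d g" by auto
    obtain s' e' where "slice_nbhd s' e' g U"
      using groupoid_top_local_basis[OF assms[unfolded openin_groupoid_top] g(1)] by blast
    then obtain \<eta> where se': "e' \<in> idem m" "e' \<odot> (st s' \<odot> s') = e'" "\<eta> \<in> DD e'"
      "g = germ m st z s' \<eta>" "Theta m st z s' (DD e') \<subseteq> U"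
      unfolding slice_nbhd_def by blast
    have "(s', e') \<in> P" using se' by (simp add: P_def)
    then obtain n where "(s', e') = p n" using P_range by blast
    then have "s' = s n" "e' = e n" by (auto simp: s_def e_def prod_eq_iff)
    moreover have "\<xi> = \<eta>" using g se' germ_slice(1) by simp
    ultimately show "\<xi> \<in> (\<Union>n. DD (e n))" using se'(3) by blast
  qed
  have inU: "germ m st z (s n) \<xi> \<in> U" if "\<xi> \<in> DD (e n)" for n \<xi>
  proof -
    have "germ m st z (s n) \<xi> \<in> Theta m st z (s n) (DD (e n))"
      unfolding Theta_iff using that by blast
    then show ?thesis using se(3) by blast
  qed
  show ?thesis using se(1,2) inU cover by blast
qed

lemma disjointed_D_sets:
  fixes e :: "nat \<Rightarrow> 'a"
  assumes "\<And>n. e n \<in> idem m"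
  obtains f where "\<And>n. f n \<in> idem m" "\<And>n. DD (f n) = disjointed (\<lambda>i. DD (e i)) n"
proof -
  define g where "g = rec_nat z (\<lambda>n g. idem_sup g (e n))"
  have g: "g n \<in> idem m \<and> DD (g n) = (\<Union>i\<in>{0..<n}. DD (e i))" for n
  proof (induction n)
    case 0
    then show ?case by (simp add: g_def D_set_zero)
  next
    case (Suc n)
    then show ?case
      using idem_sup_is_join(1) D_set_sup assms[of n] by (auto simp: g_def atLeast0_lessThan_Suc)
  qed
  show ?thesis
  proof (rule that[of "\<lambda>n. e n \<odot> idem_compl (g n)"])
    fix n
    show "e n \<odot> idem_compl (g n) \<in> idem m" using assms g idem_complement by simp
    have "DD (e n \<odot> idem_compl (g n)) = DD (e n) - DD (g n)"
      using D_set_mult[OF assms idem_complement(1)] D_set_compl D_set_subset[of "e n"] g by auto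
    then show "DD (e n \<odot> idem_compl (g n)) = disjointed (\<lambda>i. DD (e i)) n"
      using g by (simp add: disjointed_def)
  qed
qed

context
  fixes U and s f :: "nat \<Rightarrow> 'a"
  assumes bisection: "bisection m st z U"
    and f: "\<And>n. f n \<in> idem m" "\<And>n. f n \<odot> (st (s n) \<odot> s n) = f n"
    and slices_in: "\<And>n \<xi>. \<xi> \<in> DD (f n) \<Longrightarrow> germ m st z (s n) \<xi> \<in> U"
    and slices_cover: "germ_d ` U \<subseteq> (\<Union>n. DD (f n))"
begin

private lemma germ_of_slice:
  assumes "g \<in> U" "\<xi> \<in> DD (f n)" "germ_d g = \<xi>"
  shows "g = germ m st z (s n) \<xi>"
  using inj_onD[of germ_d U, OF _ _ assms(1) slices_in[OF assms(2)]] bisection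
    germ_slice(1)[OF f assms(2)] assms(3)
  by (simp add: bisection_def)

lemma bisection_slices_germ_d_image: "germ_d ` U = (\<Union>n. DD (f n))"
proof
  show "(\<Union>n. DD (f n)) \<subseteq> germ_d ` U"
  proof
    fix \<xi> assume "\<xi> \<in> (\<Union>n. DD (f n))"
    then obtain n where n: "\<xi> \<in> DD (f n)" by blast
    show "\<xi> \<in> germ_d ` U"
      by (rule image_eqI[where f=germ_d, OF germ_slice(1)[OF f n, symmetric] slices_in[OF n]])
  qed
qed (rule slices_cover)

lemma bisection_slices_germ_r_image: "germ_r m st ` U = (\<Union>n. DD (conj (s n) (f n)))"
proof
  show "germ_r m st ` U \<subseteq> (\<Union>n. DD (conj (s n) (f n)))"
  proof
    fix y assume "y \<in> germ_r m st ` U"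
    then obtain g where g: "g \<in> U" "y = germ_r m st g" by auto
    then obtain n where n: "germ_d g \<in> DD (f n)" using slices_cover by blast
    have "y = germ_r m st g" by (rule g(2))
    also have "g = germ m st z (s n) (germ_d g)" by (rule germ_of_slice[OF g(1) n refl])
    also have "germ_r m st \<dots> = theta m st (s n) (germ_d g)" by (rule germ_slice(2)[OF f n])
    finally have "y \<in> theta m st (s n) ` DD (f n)" using n by (rule image_eqI)
    then show "y \<in> (\<Union>n. DD (conj (s n) (f n)))"
      unfolding theta_image_D_set[OF f] by (rule UN_I[OF UNIV_I])
  qed
  show "(\<Union>n. DD (conj (s n) (f n))) \<subseteq> germ_r m st ` U"
  proof
    fix y assume "y \<in> (\<Union>n. DD (conj (s n) (f n)))"
    then obtain n where "y \<in> theta m st (s n) ` DD (f n)"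
      unfolding theta_image_D_set[OF f] by (rule UN_E)
    then obtain \<xi> where \<xi>: "\<xi> \<in> DD (f n)" "y = theta m st (s n) \<xi>" by (rule imageE) simp
    show "y \<in> germ_r m st ` U"
      by (rule image_eqI[where f="germ_r m st", OF _ slices_in[OF \<xi>(1)]])
        (simp add: \<xi>(2) germ_slice(2)[OF f \<xi>(1)])
  qed
qed

text \<open>Disjoint domains give disjoint ranges because \<open>germ_r\<close> is injective on the bisection \<open>U\<close>.\<close>

lemma bisection_slices_germ_r_disjoint:
  assumes disj: "disjoint_family (\<lambda>n. DD (f n))"
  shows "disjoint_family (\<lambda>n. DD (conj (s n) (f n)))"
  unfolding disjoint_family_on_def
proof (intro ballI impI equals0I)
  fix n k y assume "n \<noteq> k" and "y \<in> DD (conj (s n) (f n)) \<inter> DD (conj (s k) (f k))"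
  then have "y \<in> theta m st (s n) ` DD (f n)" "y \<in> theta m st (s k) ` DD (f k)"
    unfolding theta_image_D_set[OF f] by simp_all
  then obtain \<xi> \<xi>' where \<xi>: "\<xi> \<in> DD (f n)" "y = theta m st (s n) \<xi>"
    and \<xi>': "\<xi>' \<in> DD (f k)" "y = theta m st (s k) \<xi>'"
    by blast
  have "inj_on (germ_r m st) U" using bisection by (simp add: bisection_def)
  then have "germ m st z (s n) \<xi> = germ m st z (s k) \<xi>'"
    using slices_in[OF \<xi>(1)] slices_in[OF \<xi>'(1)] germ_slice(2)[OF f \<xi>(1)] germ_slice(2)[OF f \<xi>'(1)] \<xi> \<xi>'
    by (auto dest: inj_onD)
  then have "\<xi> = \<xi>'" using germ_slice(1)[OF f \<xi>(1)] germ_slice(1)[OF f \<xi>'(1)] by simp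
  then have "\<xi> \<in> DD (f n) \<inter> DD (f k)" using \<xi>(1) \<xi>'(1) by simp
  then show False using disjoint_family_onD[OF disj _ _ \<open>n \<noteq> k\<close>] by simp
qed

end

lemma bisection_measure_invariant:
  assumes "finite_measure \<nu>" and sets: "\<And>e. DD e \<in> sets \<nu>"
    and slice_inv: "\<And>s f. f \<in> idem m \<Longrightarrow> f \<odot> (st s \<odot> s) = f \<Longrightarrow>
      measure \<nu> (DD (conj s f)) = measure \<nu> (DD f)"
    and B: "bisection m st z U"
  shows "measure \<nu> (germ_r m st ` U) = measure \<nu> (germ_d ` U)"
proof -
  interpret finite_measure \<nu> by fact
  have "openin GTop U" using B by (simp add: bisection_def)
  then obtain e s :: "nat \<Rightarrow> 'a" where e: "\<forall>n. e n \<in> idem m \<and> e n \<odot> (st (s n) \<odot> s n) = e n"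
    and inU: "\<forall>n. \<forall>\<xi>\<in>DD (e n). germ m st z (s n) \<xi> \<in> U"
    and cover: "germ_d ` U \<subseteq> (\<Union>n. DD (e n))"
    by (blast dest: open_countable_slices)
  have e_idem: "e n \<in> idem m" and e_dom: "e n \<odot> (st (s n) \<odot> s n) = e n" for n
    using e by auto
  obtain f :: "nat \<Rightarrow> 'a" where f: "\<And>n. f n \<in> idem m" and Df: "\<And>n. DD (f n) = disjointed (\<lambda>i. DD (e i)) n"
    using disjointed_D_sets[of e, OF e_idem] by blast
  have sub: "DD (f n) \<subseteq> DD (e n)" for n
    unfolding Df by (rule disjointed_subset)
  have f_dom: "f n \<odot> (st (s n) \<odot> s n) = f n" for n
  proof -
    have "DD (f n) \<subseteq> DD (st (s n) \<odot> s n)"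
      using sub[of n] D_set_subset_dom[OF e_idem e_dom] by (rule order_trans)
    then show ?thesis using D_set_subset_iff[OF f st_mult_idem(1)] by blast
  qed
  have disj: "disjoint_family (\<lambda>n. DD (f n))"
    unfolding Df by (rule disjoint_family_disjointed)
  have f_cover: "germ_d ` U \<subseteq> (\<Union>n. DD (f n))"
    using cover by (simp add: Df UN_disjointed_eq)
  have f_inU: "\<And>n \<xi>. \<xi> \<in> DD (f n) \<Longrightarrow> germ m st z (s n) \<xi> \<in> U"
    using inU sub by blast
  note images = bisection_slices_germ_d_image[OF B f f_dom f_inU f_cover]
    bisection_slices_germ_r_image[OF B f f_dom f_inU f_cover]
    bisection_slices_germ_r_disjoint[OF B f f_dom f_inU f_cover disj]
  have "(\<lambda>n. measure \<nu> (DD (f n))) sums measure \<nu> (\<Union>n. DD (f n))"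
    by (rule finite_measure_UNION) (use sets disj in auto)
  moreover have "(\<lambda>n. measure \<nu> (DD (conj (s n) (f n)))) sums measure \<nu> (\<Union>n. DD (conj (s n) (f n)))"
    by (rule finite_measure_UNION) (use sets images(3) in auto)
  ultimately show ?thesis
    using slice_inv[OF f f_dom] images(1,2) sums_unique2 by simp
qed

section \<open>Invariant measures and invariant means\<close>

lemma sigma_sets_openin_unit_top: "sigma_sets UF {U. openin TT U} = sigma_sets UF (range DD)"
proof
  show "sigma_sets UF (range DD) \<subseteq> sigma_sets UF {U. openin TT U}"
    by (rule sigma_sets_mono') (auto intro: openin_D_set)
  show "sigma_sets UF {U. openin TT U} \<subseteq> sigma_sets UF (range DD)"
  proof (rule sigma_sets_mono, rule subsetI)
    fix U assume "U \<in> {U. openin TT U}"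
    then have U: "U = \<Union>(DD ` {e \<in> idem m. DD e \<subseteq> U})" using openin_Union_D_set by auto
    have "\<Union>(DD ` {e \<in> idem m. DD e \<subseteq> U}) \<in> sigma_sets UF (range DD)"
      by (rule sigma_sets_UNION) (auto intro: countable_image countableI_type)
    then show "U \<in> sigma_sets UF (range DD)" using U by simp
  qed
qed

lemma sets_borel_of_unit_top: "sets (borel_of_top TT) = sigma_sets UF (range DD)"
proof -
  have "{U. openin TT U} \<subseteq> Pow UF"
    using openin_subset topspace_unit_top by auto
  then show ?thesis
    unfolding borel_of_top_def topspace_unit_top
    using sets_measure_of sigma_sets_openin_unit_top by simp
qed

lemma regular_borel_prob_unit_top:
  assumes "prob_space \<nu>" and space: "space \<nu> = UF" and sets: "sets \<nu> = sigma_sets UF (range DD)"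
  shows "regular_borel_prob TT \<nu>"
proof -
  interpret prob_space \<nu> by fact
  have space': "space \<nu> = topspace TT" using space topspace_unit_top by simp
  have sets': "sets \<nu> = sigma_sets (topspace TT) (range DD)" using sets topspace_unit_top by simp
  have opens: "U \<in> sets \<nu>" if "openin TT U" for U
    using that sigma_sets_openin_unit_top sets by (auto intro: sigma_sets.Basic)
  have approx: "open_closed_approximable TT \<nu> A" if "A \<in> sets \<nu>" for A
    using open_closed_approximable_sigma_sets[OF space' opens _ sets' that]
      openin_D_set closedin_D_set by blast
  show ?thesis
    unfolding regular_borel_prob_def
    using outer_regular_if_open_closed_approximable[OF space' opens _ approx]
      inner_regular_if_open_closed_approximable[OF space' opens compact_space_unit_top _ approx]
      space' sets sets_borel_of_unit_top assms(1)
    by auto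
qed

lemma IM_D:
  assumes "\<nu> \<in> IM m st z"
  shows "space \<nu> = UF" "sets \<nu> = sigma_sets UF (range DD)" "prob_space \<nu>"
    "\<And>U. bisection m st z U \<Longrightarrow> measure \<nu> (germ_r m st ` U) = measure \<nu> (germ_d ` U)"
  using assms unfolding IM_def regular_borel_prob_def
  by (auto simp: topspace_unit_top sets_borel_of_unit_top)

lemma eta_in_inv_means:
  assumes "\<nu> \<in> IM m st z"
  shows "eta m st z \<nu> \<in> inv_means m st one z"
proof -
  note \<nu> = IM_D[OF assms]
  interpret prob_space \<nu> by (rule \<nu>(3))
  have D_sets: "DD e \<in> sets \<nu>" for e using \<nu>(2) by simp
  have eta: "eta m st z \<nu> e = measure \<nu> (DD e)" if "e \<in> idem m" for e
    using that by (simp add: eta_def)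
  show ?thesis unfolding inv_means_def
  proof (intro CollectI conjI allI ballI impI)
    fix e assume "e \<notin> idem m" then show "eta m st z \<nu> e = 0" by (simp add: eta_def)
  next
    fix e assume "e \<in> idem m" then show "eta m st z \<nu> e \<ge> 0" by (simp add: eta_def)
  next
    show "eta m st z \<nu> one = 1" using eta[OF one_idem] D_set_one \<nu>(1) prob_space by simp
  next
    fix s
    have "measure \<nu> (DD (st s \<odot> s)) = measure \<nu> (DD (s \<odot> st s))"
      using \<nu>(4)[OF Theta_dom_bisection(1)[of s]] Theta_dom_bisection(2,3)[of s] by simp
    then show "eta m st z \<nu> (st s \<odot> s) = eta m st z \<nu> (s \<odot> st s)" using eta by simp
  next
    fix e f assume e: "e \<in> idem m" and f: "f \<in> idem m" and ef: "e \<odot> f = z"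
    have "DD e \<inter> DD f = {}" using D_set_mult[OF e f] ef D_set_zero by simp
    then have "measure \<nu> (DD e \<union> DD f) = measure \<nu> (DD e) + measure \<nu> (DD f)"
      using finite_measure_Union D_sets by simp
    then show "eta m st z \<nu> (join m st {e, f}) = eta m st z \<nu> e + eta m st z \<nu> f"
      using eta e f idem_sup_is_join(1)[OF e f] D_set_sup[OF e f] by (simp add: idem_sup_def)
  qed
qed

lemma Int_stable_D_sets: "Int_stable (range DD)"
proof (rule Int_stableI)
  fix a b assume "a \<in> range DD" "b \<in> range DD"
  then obtain e f where ab: "a = DD e" "b = DD f" by auto
  show "a \<inter> b \<in> range DD"
  proof (cases "e \<in> idem m \<and> f \<in> idem m")
    case True
    then show ?thesis using ab D_set_mult by auto
  next
    case False
    then have "a \<inter> b = DD z" using ab D_set_not_idem D_set_zero by auto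
    then show ?thesis by simp
  qed
qed

lemma inj_on_eta: "inj_on (eta m st z) (IM m st z)"
proof (rule inj_onI)
  fix \<nu>1 \<nu>2
  assume \<nu>1: "\<nu>1 \<in> IM m st z" and \<nu>2: "\<nu>2 \<in> IM m st z" and eq: "eta m st z \<nu>1 = eta m st z \<nu>2"
  interpret p1: prob_space \<nu>1 by (rule IM_D(3)[OF \<nu>1])
  interpret p2: prob_space \<nu>2 by (rule IM_D(3)[OF \<nu>2])
  have "emeasure \<nu>1 (DD e) = emeasure \<nu>2 (DD e)" for e
  proof (cases "e \<in> idem m")
    case True
    then have "measure \<nu>1 (DD e) = measure \<nu>2 (DD e)" using eq by (metis eta_def)
    then show ?thesis by (simp add: p1.emeasure_eq_measure p2.emeasure_eq_measure)
  qed (simp add: D_set_not_idem)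
  moreover have "range DD \<subseteq> Pow UF" using D_set_subset by auto
  ultimately show "\<nu>1 = \<nu>2"
    using IM_D(2)[OF \<nu>1] IM_D(2)[OF \<nu>2] D_set_one
    by (intro measure_eqI_generator_eq[where E="range DD" and \<Omega>=UF and A="\<lambda>_. UF",
          OF Int_stable_D_sets]) auto
qed

lemma eta_mixture:
  assumes "\<nu> \<in> IM m st z"
    and "\<forall>A\<in>sets \<nu>. measure \<nu> A = t * measure \<nu>1 A + (1 - t) * measure \<nu>2 A"
  shows "eta m st z \<nu> = (\<lambda>e. t * eta m st z \<nu>1 e + (1 - t) * eta m st z \<nu>2 e)"
  using assms IM_D(2)[OF assms(1)] by (auto simp: eta_def)

lemma dom_ran_restrict:
  assumes f: "f \<in> idem m" and le: "f \<odot> (st s \<odot> s) = f"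
  shows "st (s \<odot> f) \<odot> (s \<odot> f) = f" "(s \<odot> f) \<odot> st (s \<odot> f) = conj s f"
proof -
  have st: "st (s \<odot> f) = f \<odot> st s" using st_mult f by simp
  have "f \<odot> st s \<odot> (s \<odot> f) = (f \<odot> (st s \<odot> s)) \<odot> f" by (simp add: mult_assoc)
  then show "st (s \<odot> f) \<odot> (s \<odot> f) = f" using st le f by (simp add: idem_iff)
  have "(s \<odot> f) \<odot> (f \<odot> st s) = s \<odot> ((f \<odot> f) \<odot> st s)" by (simp add: mult_assoc)
  then show "(s \<odot> f) \<odot> st (s \<odot> f) = conj s f" using st f by (simp add: idem_iff conj_def)
qed

lemma inv_means_conj:
  assumes "\<mu> \<in> inv_means m st one z" "f \<in> idem m" "f \<odot> (st s \<odot> s) = f"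
  shows "\<mu> (conj s f) = \<mu> f"
proof -
  have "\<mu> (st (s \<odot> f) \<odot> (s \<odot> f)) = \<mu> ((s \<odot> f) \<odot> st (s \<odot> f))"
    using assms(1) unfolding inv_means_def by auto
  then show ?thesis using dom_ran_restrict[OF assms(2,3)] by simp
qed

lemma D_set_range_idem:
  assumes "A \<in> range DD"
  obtains e where "e \<in> idem m" "A = DD e"
proof -
  obtain e where A: "A = DD e" using assms by blast
  show ?thesis
  proof (cases "e \<in> idem m")
    case True
    then show ?thesis using A that by blast
  next
    case False
    then show ?thesis using A that[OF zero_idem] D_set_not_idem D_set_zero by simp
  qed
qed

lemma algebra_D_sets: "algebra UF (range DD)"
  unfolding algebra_iff_Un
proof (intro conjI ballI)
  show "range DD \<subseteq> Pow UF" using D_set_subset by auto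
  have "DD z \<in> range DD" by (rule rangeI)
  then show "{} \<in> range DD" by (simp add: D_set_zero)
next
  fix a assume "a \<in> range DD"
  then obtain e where "e \<in> idem m" "a = DD e" by (rule D_set_range_idem)
  then have "UF - a = DD (idem_compl e)" by (simp add: D_set_compl)
  then show "UF - a \<in> range DD" by simp
next
  fix a b assume "a \<in> range DD" "b \<in> range DD"
  then obtain e f where "e \<in> idem m" "a = DD e" "f \<in> idem m" "b = DD f"
    by (metis D_set_range_idem)
  then have "a \<union> b = DD (idem_sup e f)" by (simp add: D_set_sup)
  then show "a \<union> b \<in> range DD" by simp
qed

lemma decseq_D_sets_eventually_empty:
  assumes "range A \<subseteq> range DD" "decseq A" "(\<Inter>i. A i) = {}"
  obtains N where "A N = {}"
proof -
  have closed: "closedin TT (A n)" for n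
  proof -
    obtain e where "A n = DD e" using assms(1) by auto
    then show ?thesis using closedin_D_set by simp
  qed
  have "\<exists>N. A N = {}"
  proof (rule ccontr)
    assume "\<nexists>N. A N = {}"
    then have "(\<Inter>i. A i) \<noteq> {}"
      using compact_space_imp_nest[OF compact_space_unit_top closed _ assms(2)] by blast
    then show False using assms(3) by contradiction
  qed
  then show ?thesis using that by blast
qed

definition mean_content :: "('a \<Rightarrow> real) \<Rightarrow> 'a set set \<Rightarrow> ennreal" where
  "mean_content \<mu> A = ennreal (\<mu> (THE e. e \<in> idem m \<and> DD e = A))"

lemma mean_content_D_set: "e \<in> idem m \<Longrightarrow> mean_content \<mu> (DD e) = \<mu> e"
proof -
  assume e: "e \<in> idem m"
  have "(THE e'. e' \<in> idem m \<and> DD e' = DD e) = e"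
    by (rule the_equality) (use e D_set_inj in auto)
  then show ?thesis by (simp add: mean_content_def)
qed

lemma mean_content_empty:
  assumes "\<mu> \<in> inv_means m st one z"
  shows "mean_content \<mu> {} = 0"
proof -
  have add: "\<mu> (idem_sup e f) = \<mu> e + \<mu> f" if "e \<in> idem m" "f \<in> idem m" "e \<odot> f = z" for e f
    using assms that unfolding inv_means_def idem_sup_def by auto
  have "\<mu> z = 0" using add[of z z] idem_sup_zero[of z] by simp
  then show ?thesis using mean_content_D_set[of z] D_set_zero by simp
qed

lemma additive_mean_content:
  assumes \<mu>: "\<mu> \<in> inv_means m st one z"
  shows "additive (range DD) (mean_content \<mu>)"
  unfolding additive_def
proof (intro ballI impI)
  fix a b assume a: "a \<in> range DD" and b: "b \<in> range DD" and disj: "a \<inter> b = {}"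
  obtain e where e: "e \<in> idem m" "a = DD e" using a by (rule D_set_range_idem)
  obtain f where f: "f \<in> idem m" "b = DD f" using b by (rule D_set_range_idem)
  have "e \<odot> f = z" using D_set_mult[OF e(1) f(1)] D_set_empty_iff disj e f by simp
  then have "\<mu> (idem_sup e f) = \<mu> e + \<mu> f"
    using \<mu> e(1) f(1) unfolding inv_means_def idem_sup_def by auto
  moreover have "\<mu> e \<ge> 0" "\<mu> f \<ge> 0" using \<mu> e(1) f(1) unfolding inv_means_def by auto
  ultimately have "mean_content \<mu> (DD (idem_sup e f)) = mean_content \<mu> a + mean_content \<mu> b"
    using mean_content_D_set idem_sup_is_join(1)[OF e(1) f(1)] e f by (simp add: ennreal_plus)
  then show "mean_content \<mu> (a \<union> b) = mean_content \<mu> a + mean_content \<mu> b"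
    using D_set_sup[OF e(1) f(1)] e f by simp
qed

lemma mean_content_continuous:
  assumes "\<mu> \<in> inv_means m st one z"
    and A: "range A \<subseteq> range DD" "decseq A" "(\<Inter>i. A i) = {}"
  shows "(\<lambda>i. mean_content \<mu> (A i)) \<longlonglongrightarrow> 0"
proof -
  obtain N where "A N = {}" using decseq_D_sets_eventually_empty[OF A] .
  then have "\<forall>n\<ge>N. mean_content \<mu> (A n) = 0"
    using decseqD[OF A(2)] mean_content_empty[OF assms(1)] by (metis subset_empty)
  then show ?thesis by (intro tendsto_eventually eventually_sequentiallyI[of N]) simp
qed

lemma inv_means_extends_to_measure:
  assumes \<mu>: "\<mu> \<in> inv_means m st one z"
  obtains \<nu> where "space \<nu> = UF" "sets \<nu> = sigma_sets UF (range DD)"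
    "\<And>e. e \<in> idem m \<Longrightarrow> emeasure \<nu> (DD e) = \<mu> e"
proof -
  interpret algebra UF "range DD" by (rule algebra_D_sets)
  have "positive (range DD) (mean_content \<mu>)"
    unfolding positive_def using mean_content_empty[OF \<mu>] by simp
  moreover have "mean_content \<mu> A \<noteq> \<infinity>" for A by (simp add: mean_content_def)
  ultimately obtain \<mu>' where \<mu>': "\<forall>A\<in>range DD. \<mu>' A = mean_content \<mu> A"
    and ms: "measure_space UF (sigma_sets UF (range DD)) \<mu>'"
    using caratheodory_empty_continuous[OF _ additive_mean_content[OF \<mu>] _
        mean_content_continuous[OF \<mu>]] by blast
  have sa: "sigma_algebra UF (sigma_sets UF (range DD))" and "positive (sigma_sets UF (range DD)) \<mu>'"
    and "countably_additive (sigma_sets UF (range DD)) \<mu>'"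
    using ms unfolding measure_space_def by auto
  then have "emeasure (measure_of UF (sigma_sets UF (range DD)) \<mu>') A = \<mu>' A"
    if "A \<in> sigma_sets UF (range DD)" for A
    using emeasure_measure_of_sigma that by blast
  then show ?thesis
    using sigma_algebra.space_measure_of_eq[OF sa] sigma_algebra.sets_measure_of_eq[OF sa] \<mu>'
      mean_content_D_set
    by (intro that[of "measure_of UF (sigma_sets UF (range DD)) \<mu>'"]) auto
qed

lemma inv_means_eq_eta:
  assumes \<mu>: "\<mu> \<in> inv_means m st one z"
  obtains \<nu> where "\<nu> \<in> IM m st z" "eta m st z \<nu> = \<mu>"
proof -
  obtain \<nu> where space: "space \<nu> = UF" and sets: "sets \<nu> = sigma_sets UF (range DD)"
    and \<nu>_D: "\<And>e. e \<in> idem m \<Longrightarrow> emeasure \<nu> (DD e) = \<mu> e"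
    using inv_means_extends_to_measure[OF \<mu>] by blast
  have "prob_space \<nu>"
    using \<nu>_D[OF one_idem] \<mu> space D_set_one by (intro prob_spaceI) (simp add: inv_means_def)
  then interpret prob_space \<nu> .
  have measure_D: "measure \<nu> (DD e) = \<mu> e" if "e \<in> idem m" for e
    using \<nu>_D[OF that] \<mu> that by (simp add: measure_def inv_means_def)
  have "\<nu> \<in> IM m st z"
    unfolding IM_def
  proof (intro CollectI conjI allI impI)
    show "regular_borel_prob TT \<nu>"
      by (rule regular_borel_prob_unit_top) (use space sets \<open>prob_space \<nu>\<close> in auto)
    fix U assume "bisection m st z U"
    then show "measure \<nu> (germ_r m st ` U) = measure \<nu> (germ_d ` U)"
      using bisection_measure_invariant[OF finite_measure_axioms] sets measure_D inv_means_conj[OF \<mu>]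
      by simp
  qed
  moreover have "eta m st z \<nu> = \<mu>"
    using measure_D \<mu> by (auto simp: eta_def inv_means_def)
  ultimately show ?thesis by (rule that)
qed

end

theorem mainTheorem10:
  fixes m :: "'a::countable \<Rightarrow> 'a \<Rightarrow> 'a" and st :: "'a \<Rightarrow> 'a" and one z :: 'a
  assumes "boolean_inverse_monoid m st one z"
    and "condition_H m z"
  shows "(\<forall>\<nu>\<in>IM m st z. eta m st z \<nu> \<in> inv_means m st one z)
    \<and> bij_betw (eta m st z) (IM m st z) (inv_means m st one z)
    \<and> (\<forall>\<nu>1\<in>IM m st z. \<forall>\<nu>2\<in>IM m st z. \<forall>\<nu>\<in>IM m st z. \<forall>t::real.
         0 \<le> t \<and> t \<le> 1 \<and>
         (\<forall>A\<in>sets \<nu>. measure \<nu> A = t * measure \<nu>1 A + (1 - t) * measure \<nu>2 A) \<longrightarrow>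
         eta m st z \<nu> = (\<lambda>e. t * eta m st z \<nu>1 e + (1 - t) * eta m st z \<nu>2 e))"
proof -
  interpret bool_inv_monoid m st one z by unfold_locales (rule assms(1))
  have "eta m st z ` IM m st z = inv_means m st one z"
  proof
    show "eta m st z ` IM m st z \<subseteq> inv_means m st one z"
      using eta_in_inv_means by blast
    show "inv_means m st one z \<subseteq> eta m st z ` IM m st z"
    proof
      fix \<mu> assume "\<mu> \<in> inv_means m st one z"
      then obtain \<nu> where "\<nu> \<in> IM m st z" "eta m st z \<nu> = \<mu>" by (rule inv_means_eq_eta)
      then show "\<mu> \<in> eta m st z ` IM m st z" by blast
    qed
  qed
  then show ?thesis
    using eta_in_inv_means inj_on_eta eta_mixture by (simp add: bij_betw_def)
qed

end
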